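(* Let $\bar x\in\Phi$ be a local second-order weak sharp minimizer of problem (P) with corresponding constants $\kappa>0$ and $\delta>0$. Suppose that DirRCQ holds at every $x\in\Phi\cap B_\delta(\bar x)$ in every direction $d\in C(x)$. Then for any $\varepsilon\in[0,1/2)$, $x\in S\cap B_\delta(\bar x)$ and $d\in C(x)\cap N^{P,\varepsilon}_S(x)$: (i) for every nonempty convex subset $K(d)\subset T''_K(g(x);\nabla g(x)d)$ there exists $\lambda\in\Lambda^c(x;d)$ with $\sigma_{K(d)}(\lambda)\le0$; (ii) if $T^2_K(g(x);\nabla g(x)d)\ne\emptyset$, then for every nonempty convex subset $\hat K(d)\subset T^2_K(g(x);\nabla g(x)d)$ there exists $\lambda\in\Lambda^c(x;d)$ with $\nabla^2_{xx}L(x,\lambda)(d,d)-\sigma_{\hat K(d)}(\lambda)\ge2\kappa(1-2\varepsilon)^2\|d\|^2$. Moreover, for every $x\in S\cap B_\delta(\bar x)$ and every $d\in C(x)$, (i) holds and (ii) holds with right-hand side replaced by $2\kappa[\mathrm{dist}(d,T_S(x))]^2$.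
   Context: Standing setting: $f:\mathbb{R}^n\to\mathbb{R}$, $g:\mathbb{R}^n\to\mathbb{R}^m$ twice continuously differentiable, $K\subset\mathbb{R}^m$ closed; (P) is $\min f(x)$ s.t. $g(x)\in K$; $\Phi:=\{x:g(x)\in K\}$; $S$ is the (nonempty) set of optimal solutions; $L(x,\lambda):=f(x)+\langle g(x),\lambda\rangle$. $\bar x\in\Phi$ is a local second-order weak sharp minimizer with constants $\kappa,\delta>0$ if $f(x)\ge f(\bar x)+\kappa[\mathrm{dist}(x,S)]^2$ for all $x\in\Phi\cap B_\delta(\bar x)$. For a closed set $A$ and $\bar x\in A$: $T_A(\bar x):=\{d:\exists t_k\downarrow0,d_k\to d,\bar x+t_kd_k\in A\}$; for $d\in T_A(\bar x)$, $T^2_A(\bar x;d):=\{w:\exists t_k\downarrow0,w_k\to w,\bar x+t_kd+\tfrac12t_k^2w_k\in A\}$, $T''_A(\bar x;d):=\{w:\exists(t_k,r_k)\downarrow(0,0),t_k/r_k\to0,w_k\to w,\bar x+t_kd+\tfrac12t_kr_kw_k\in A\}$. $C(x):=\{d:\nabla g(x)d\in T_K(g(x)),\nabla f(x)d\le0\}$. $N^P_A(\bar x):=\{v:\exists\tau>0,\ \bar x\text{ is a nearest point of }A\text{ to }\bar x+\tau v\}$; $N^{P,\varepsilon}_A(\bar x):=\{v:\mathrm{dist}(v,N^P_A(\bar x))\le\varepsilon\|v\|\}$. Fréchet normal cone $\hat N_A(y):=\{v:\limsup_{y'\to y,y'\in A}\langle v,y'-y\rangle/\|y'-y\|\le0\}$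 (empty if $y\notin A$); $N_A(\bar y;u):=\{v:\exists t_k\downarrow0,u_k\to u,v_k\to v,v_k\in\hat N_A(\bar y+t_ku_k)\}$; $N^c_A(\bar y;u):=\mathrm{cl}\,\mathrm{co}\,N_A(\bar y;u)$. $\Lambda^c(x;d):=\{\lambda:\nabla_xL(x,\lambda)=0,\lambda\in N^c_K(g(x);\nabla g(x)d)\}$. DirRCQ at $x$ in direction $d$: $\nabla g(x)^T\lambda=0,\ \lambda\in N^c_K(g(x);\nabla g(x)d)\Rightarrow\lambda=0$. $\sigma_A(\lambda):=\sup_{u\in A}\langle\lambda,u\rangle$. *)

theory Defs
  imports "HOL-Analysis.Analysis"
begin

text \<open>Problem (P): minimise f x subject to g x in K.\<close>

definition feasible_set :: "('a \<Rightarrow> 'b) \<Rightarrow> 'b set \<Rightarrow> 'a set" where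
  "feasible_set g K = {x. g x \<in> K}"

definition optimal_set :: "('a \<Rightarrow> real) \<Rightarrow> ('a \<Rightarrow> 'b) \<Rightarrow> 'b set \<Rightarrow> 'a set" where
  "optimal_set f g K = {x \<in> feasible_set g K. \<forall>y\<in>feasible_set g K. f x \<le> f y}"

definition weak_sharp_min2 ::
  "('a::metric_space \<Rightarrow> real) \<Rightarrow> ('a \<Rightarrow> 'b) \<Rightarrow> 'b set \<Rightarrow> 'a \<Rightarrow> real \<Rightarrow> real \<Rightarrow> bool" where
  "weak_sharp_min2 f g K xbar \<kappa> \<delta> \<longleftrightarrow>
     xbar \<in> feasible_set g K \<and> \<kappa> > 0 \<and> \<delta> > 0 \<and>
     (\<forall>x \<in> feasible_set g K \<inter> ball xbar \<delta>.
        f x \<ge> f xbar + \<kappa> * (infdist x (optimal_set f g K))\<^sup>2)"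

definition tangent_cone :: "'a::real_normed_vector set \<Rightarrow> 'a \<Rightarrow> 'a set" where
  "tangent_cone A x = {d. \<exists>(t::nat \<Rightarrow> real) dk. (\<forall>k. t k > 0) \<and> t \<longlonglongrightarrow> 0 \<and>
      dk \<longlonglongrightarrow> d \<and> (\<forall>k. x + t k *\<^sub>R dk k \<in> A)}"

definition second_tangent_set :: "'a::real_normed_vector set \<Rightarrow> 'a \<Rightarrow> 'a \<Rightarrow> 'a set" where
  "second_tangent_set A x d = {w. \<exists>(t::nat \<Rightarrow> real) wk. (\<forall>k. t k > 0) \<and> t \<longlonglongrightarrow> 0 \<and>
      wk \<longlonglongrightarrow> w \<and> (\<forall>k. x + t k *\<^sub>R d + ((1/2) * (t k)\<^sup>2) *\<^sub>R wk k \<in> A)}"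

definition asymptotic_second_tangent_cone :: "'a::real_normed_vector set \<Rightarrow> 'a \<Rightarrow> 'a \<Rightarrow> 'a set" where
  "asymptotic_second_tangent_cone A x d = {w. \<exists>(t::nat \<Rightarrow> real) (r::nat \<Rightarrow> real) wk.
      (\<forall>k. t k > 0 \<and> r k > 0) \<and> t \<longlonglongrightarrow> 0 \<and> r \<longlonglongrightarrow> 0 \<and>
      (\<lambda>k. t k / r k) \<longlonglongrightarrow> 0 \<and> wk \<longlonglongrightarrow> w \<and>
      (\<forall>k. x + t k *\<^sub>R d + ((1/2) * t k * r k) *\<^sub>R wk k \<in> A)}"

definition critical_cone ::
  "('a \<Rightarrow> ('a \<Rightarrow>\<^sub>L real)) \<Rightarrow> ('a \<Rightarrow> ('a \<Rightarrow>\<^sub>L 'b::real_normed_vector)) \<Rightarrow> ('a \<Rightarrow> 'b) \<Rightarrow> 'b set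
     \<Rightarrow> 'a::real_normed_vector \<Rightarrow> 'a set" where
  "critical_cone Df Dg g K x =
     {d. blinfun_apply (Dg x) d \<in> tangent_cone K (g x) \<and> blinfun_apply (Df x) d \<le> 0}"

definition prox_normal_cone :: "'a::real_normed_vector set \<Rightarrow> 'a \<Rightarrow> 'a set" where
  "prox_normal_cone A x = {v. \<exists>\<tau>>0. x \<in> A \<and>
      (\<forall>y\<in>A. dist (x + \<tau> *\<^sub>R v) x \<le> dist (x + \<tau> *\<^sub>R v) y)}"

definition eps_prox_normal_cone :: "'a::real_normed_vector set \<Rightarrow> 'a \<Rightarrow> real \<Rightarrow> 'a set" where
  "eps_prox_normal_cone A x \<epsilon> = {v. infdist v (prox_normal_cone A x) \<le> \<epsilon> * norm v}"

text \<open>Frechet (regular) normal cone; the limsup condition written out.\<close>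
definition frechet_normal_cone :: "'a::real_inner set \<Rightarrow> 'a \<Rightarrow> 'a set" where
  "frechet_normal_cone A y = (if y \<in> A then
     {v. \<forall>e>0. \<exists>r>0. \<forall>y'\<in>A. y' \<noteq> y \<and> norm (y' - y) < r \<longrightarrow>
          inner v (y' - y) / norm (y' - y) \<le> e}
     else {})"

definition dir_normal_cone :: "'a::real_inner set \<Rightarrow> 'a \<Rightarrow> 'a \<Rightarrow> 'a set" where
  "dir_normal_cone A y u = {v. \<exists>(t::nat \<Rightarrow> real) uk vk. (\<forall>k. t k > 0) \<and> t \<longlonglongrightarrow> 0 \<and>
      uk \<longlonglongrightarrow> u \<and> vk \<longlonglongrightarrow> v \<and> (\<forall>k. vk k \<in> frechet_normal_cone A (y + t k *\<^sub>R uk k))}"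

definition conv_dir_normal_cone :: "'a::real_inner set \<Rightarrow> 'a \<Rightarrow> 'a \<Rightarrow> 'a set" where
  "conv_dir_normal_cone A y u = closure (convex hull (dir_normal_cone A y u))"

text \<open>Multiplier set Lambda^c(x;d); nabla_x L(x,lam) = 0 written as a linear functional identity.\<close>
definition multipliers_c ::
  "('a \<Rightarrow> ('a \<Rightarrow>\<^sub>L real)) \<Rightarrow> ('a \<Rightarrow> ('a \<Rightarrow>\<^sub>L 'b::real_inner)) \<Rightarrow> ('a \<Rightarrow> 'b) \<Rightarrow> 'b set
     \<Rightarrow> 'a::real_normed_vector \<Rightarrow> 'a \<Rightarrow> 'b set" where
  "multipliers_c Df Dg g K x d =
     {lam. (\<forall>v. blinfun_apply (Df x) v + inner (blinfun_apply (Dg x) v) lam = 0) \<and>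
           lam \<in> conv_dir_normal_cone K (g x) (blinfun_apply (Dg x) d)}"

definition DirRCQ ::
  "('a \<Rightarrow> ('a \<Rightarrow>\<^sub>L 'b::real_inner)) \<Rightarrow> ('a \<Rightarrow> 'b) \<Rightarrow> 'b set \<Rightarrow> 'a::real_normed_vector \<Rightarrow> 'a \<Rightarrow> bool" where
  "DirRCQ Dg g K x d \<longleftrightarrow>
     (\<forall>lam. (\<forall>v. inner (blinfun_apply (Dg x) v) lam = 0) \<and>
            lam \<in> conv_dir_normal_cone K (g x) (blinfun_apply (Dg x) d) \<longrightarrow> lam = 0)"

definition support_fun :: "'a::real_inner set \<Rightarrow> 'a \<Rightarrow> ereal" where
  "support_fun A lam = (SUP u\<in>A. ereal (inner lam u))"

definition hessL ::
  "('a \<Rightarrow> ('a \<Rightarrow>\<^sub>L ('a \<Rightarrow>\<^sub>L real))) \<Rightarrow> ('a \<Rightarrow> ('a \<Rightarrow>\<^sub>L ('a \<Rightarrow>\<^sub>L 'b::real_inner)))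
     \<Rightarrow> 'a::real_normed_vector \<Rightarrow> 'b \<Rightarrow> 'a \<Rightarrow> real" where
  "hessL D2f D2g x lam d =
     blinfun_apply (blinfun_apply (D2f x) d) d + inner (blinfun_apply (blinfun_apply (D2g x) d) d) lam"

end

theory Submission
  imports Defs
begin

text \<open>Quadratic growth of \<open>f\<close> with respect to \<open>S\<close> bounds the second-order difference quotient of
  \<open>f\<close> along feasible arcs \<open>x + t d + s z'\<close> from below by \<open>2\<kappa>\<theta>\<^sup>2\<close>, where \<open>\<theta>\<close> is the rate at which
  \<open>x + t d\<close> leaves \<open>S\<close>: \<open>(1 - 2\<epsilon>)\<parallel>d\<parallel>\<close> for \<open>\<epsilon>\<close>-proximal normal directions and \<open>dist(d, T\<^sub>S(x))\<close> in
  general. Such arcs exist for every \<open>z\<close> whose linearised constraint value \<open>Dg z + c D\<^sup>2g(d,d) - w\<close>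
  is polar to the directional normal cone: a Clarke-type tangency estimate controls the
  violation of the constraint, and DirRCQ, through directional metric subregularity obtained
  by an Ekeland-type argument, corrects it. The resulting primal inequality, valid for all \<open>z\<close>
  and all \<open>w\<close> in the convex set \<open>K(d)\<close>, is dualised by separation into a multiplier in
  \<open>\<Lambda>\<^sup>c(x;d)\<close>, DirRCQ once more excluding a degenerate one. Second-order tangent vectors
  (\<open>c = 1\<close>) give (ii), asymptotic ones (\<open>c = 0\<close>) give (i).\<close>

section \<open>Second-order expansions along sequences\<close>

lemma second_order_taylor_bound:
  fixes F :: "'a::real_normed_vector \<Rightarrow> 'c::real_normed_vector"
    and DF :: "'a \<Rightarrow> ('a \<Rightarrow>\<^sub>L 'c)" and D2 :: "'a \<Rightarrow>\<^sub>L ('a \<Rightarrow>\<^sub>L 'c)"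
  assumes dF: "\<And>y. (F has_derivative blinfun_apply (DF y)) (at y)"
    and d2F: "(DF has_derivative blinfun_apply D2) (at x)"
    and e: "e > 0"
  shows "\<exists>\<delta>>0. \<forall>h. norm h < \<delta> \<longrightarrow>
           norm (F (x + h) - F x - DF x h - (1/2) *\<^sub>R D2 h h) \<le> e * norm h ^ 2"
proof -
  from d2F e obtain \<delta> where dpos: "\<delta> > 0" and dd: "\<And>y. norm (y - x) < \<delta> \<Longrightarrow>
      norm (DF y - DF x - blinfun_apply D2 (y - x)) \<le> e * norm (y - x)"
    unfolding has_derivative_at_alt by blast
  have "norm (F (x + h) - F x - DF x h - (1/2) *\<^sub>R D2 h h) \<le> e * norm h ^ 2"
    if h: "norm h < \<delta>" for h
  proof -
    define G where "G s = F (x + s *\<^sub>R h) - s *\<^sub>R DF x h - (s\<^sup>2 / 2) *\<^sub>R D2 h h" for s :: real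
    define G' where "G' s = (\<lambda>t::real. t *\<^sub>R (DF (x + s *\<^sub>R h) h - DF x h - s *\<^sub>R D2 h h))" for s
    have derG: "(G has_derivative G' s) (at s within {0..1})" for s
    proof -
      have "((\<lambda>s. x + s *\<^sub>R h) has_derivative (\<lambda>t. t *\<^sub>R h)) (at s within {0..1})"
        by (auto intro!: derivative_eq_intros)
      from has_derivative_compose[OF this has_derivative_at_withinI[OF dF]]
      have "((\<lambda>s. F (x + s *\<^sub>R h)) has_derivative (\<lambda>t. DF (x + s *\<^sub>R h) (t *\<^sub>R h))) (at s within {0..1})"
        by (simp add: o_def)
      then have "(G has_derivative (\<lambda>t. DF (x + s *\<^sub>R h) (t *\<^sub>R h) - t *\<^sub>R DF x h - (t * s) *\<^sub>R D2 h h))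
          (at s within {0..1})"
        unfolding G_def by (auto intro!: derivative_eq_intros simp: algebra_simps)
      then show ?thesis
        by (simp add: G'_def blinfun.scaleR_right algebra_simps)
    qed
    have "onorm (G' s) \<le> e * norm h ^ 2" if s: "s \<in> {0..1}" for s
    proof -
      have "norm (s *\<^sub>R h) < \<delta>"
        using s h mult_left_le_one_le[of "norm h" s] by auto
      then have "norm (DF (x + s *\<^sub>R h) - DF x - D2 (s *\<^sub>R h)) \<le> e * norm (s *\<^sub>R h)"
        using dd[of "x + s *\<^sub>R h"] by simp
      also have "\<dots> \<le> e * norm h"
        using s e by (auto intro!: mult_left_mono mult_left_le_one_le)
      finally have A: "norm (DF (x + s *\<^sub>R h) - DF x - D2 (s *\<^sub>R h)) \<le> e * norm h" .
      have "norm (DF (x + s *\<^sub>R h) h - DF x h - s *\<^sub>R D2 h h)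
          = norm ((DF (x + s *\<^sub>R h) - DF x - D2 (s *\<^sub>R h)) h)"
        by (simp add: blinfun.diff_left blinfun.scaleR_left blinfun.scaleR_right)
      also have "\<dots> \<le> e * norm h * norm h"
        using A norm_blinfun order_trans mult_right_mono norm_ge_zero by metis
      finally have "norm (DF (x + s *\<^sub>R h) h - DF x h - s *\<^sub>R D2 h h) \<le> e * norm h ^ 2"
        by (simp add: power2_eq_square mult.assoc)
      then show ?thesis
        unfolding G'_def using e
        by (intro onorm_bound) (auto intro: mult_left_mono simp: mult.commute)
    qed
    then have "norm (G 1 - G 0) \<le> e * norm h ^ 2 * norm (1 - 0 :: real)"
      by (intro differentiable_bound[OF convex_real_interval(5) derG]) auto
    moreover have "G 1 - G 0 = F (x + h) - F x - DF x h - (1/2) *\<^sub>R D2 h h"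
      by (simp add: G_def)
    ultimately show ?thesis by simp
  qed
  with dpos show ?thesis by blast
qed

lemma remainder_quotient_tendsto_zero:
  fixes R :: "'a::real_normed_vector \<Rightarrow> 'c::real_normed_vector"
  assumes R: "\<And>e. e > 0 \<Longrightarrow> \<exists>\<delta>>0. \<forall>h. norm h < \<delta> \<longrightarrow> norm (R h) \<le> e * norm h ^ n"
    and h: "hk \<longlonglongrightarrow> 0"
    and bd: "eventually (\<lambda>k. norm (hk k) \<le> B * s k) sequentially"
    and s: "\<And>k. s k > 0"
  shows "(\<lambda>k. inverse (s k ^ n) *\<^sub>R R (hk k)) \<longlonglongrightarrow> 0"
proof (rule LIMSEQ_I)
  fix \<epsilon> :: real assume \<epsilon>: "\<epsilon> > 0"
  define e where "e = \<epsilon> / (\<bar>B\<bar> ^ n + 1)"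
  have e: "e > 0" unfolding e_def using \<epsilon> by (simp add: add_nonneg_pos)
  obtain \<delta> where \<delta>: "\<delta> > 0" "\<And>h. norm h < \<delta> \<Longrightarrow> norm (R h) \<le> e * norm h ^ n"
    using R[OF e] by blast
  have "eventually (\<lambda>k. norm (hk k) < \<delta>) sequentially"
    using order_tendstoD(2)[OF tendsto_norm_zero[OF h] \<delta>(1)] by simp
  with bd have "eventually (\<lambda>k. norm (inverse (s k ^ n) *\<^sub>R R (hk k) - 0) < \<epsilon>) sequentially"
  proof eventually_elim
    case (elim k)
    have sk: "s k > 0" using s by auto
    have "norm (R (hk k)) \<le> e * norm (hk k) ^ n" using \<delta>(2) elim by auto
    also have "\<dots> \<le> e * (\<bar>B\<bar> * s k) ^ n"
      using elim(1) sk e abs_ge_self[of B]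
      by (intro mult_left_mono power_mono) (auto intro: order_trans mult_right_mono)
    also have "\<dots> = e * \<bar>B\<bar> ^ n * s k ^ n" by (simp add: power_mult_distrib)
    finally have "norm (inverse (s k ^ n) *\<^sub>R R (hk k)) \<le> e * \<bar>B\<bar> ^ n"
      using sk by (simp add: divide_inverse[symmetric] mult.commute divide_le_eq)
    also have "\<dots> < \<epsilon>" using \<epsilon> unfolding e_def by (simp add: field_simps add_pos_nonneg)
    finally show ?case by simp
  qed
  then show "\<exists>no. \<forall>k\<ge>no. norm (inverse (s k ^ n) *\<^sub>R R (hk k) - 0) < \<epsilon>"
    by (simp add: eventually_sequentially)
qed

lemma scaled_convergent_norm_bound:
  fixes q :: "nat \<Rightarrow> 'a::real_normed_vector"
  assumes "q \<longlonglongrightarrow> d" "\<And>k. t k > 0"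
  shows "eventually (\<lambda>k. norm (t k *\<^sub>R q k) \<le> (norm d + 1) * t k) sequentially"
  using tendstoD[OF assms(1) zero_less_one]
proof eventually_elim
  case (elim k)
  have "norm (q k) \<le> norm d + norm (q k - d)"
    by (metis add.commute diff_add_cancel norm_triangle_ineq)
  then show ?case
    using elim assms(2)[of k] by (simp add: dist_norm mult.commute mult_left_mono)
qed

lemma derivative_quotient_tendsto:
  fixes F :: "'a::real_normed_vector \<Rightarrow> 'c::real_normed_vector"
  assumes dF: "(F has_derivative DF) (at x)" and t: "t \<longlonglongrightarrow> 0" "\<And>k. t k > 0"
    and z: "zk \<longlonglongrightarrow> z"
  shows "(\<lambda>k. inverse (t k) *\<^sub>R (F (x + t k *\<^sub>R zk k) - F x)) \<longlonglongrightarrow> DF z"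
proof -
  have bl: "bounded_linear DF" using dF by (simp add: has_derivative_def)
  define R where "R h = F (x + h) - F x - DF h" for h
  have "\<exists>\<delta>>0. \<forall>h. norm h < \<delta> \<longrightarrow> norm (R h) \<le> e * norm h ^ 1" if "e > 0" for e
  proof -
    obtain \<delta> where "\<delta> > 0" "\<And>y. norm (y - x) < \<delta> \<Longrightarrow> norm (F y - F x - DF (y - x)) \<le> e * norm (y - x)"
      using dF \<open>e > 0\<close> unfolding has_derivative_at_alt by blast
    then show ?thesis by (metis R_def add_diff_cancel_left' power_one_right)
  qed
  from remainder_quotient_tendsto_zero[OF this _ scaled_convergent_norm_bound[OF z t(2)] t(2)]
  have "(\<lambda>k. inverse (t k) *\<^sub>R R (t k *\<^sub>R zk k)) \<longlonglongrightarrow> 0"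
    using tendsto_scaleR[OF t(1) z] by simp
  moreover have "inverse (t k) *\<^sub>R (F (x + t k *\<^sub>R zk k) - F x)
      = DF (zk k) + inverse (t k) *\<^sub>R R (t k *\<^sub>R zk k)" for k
    using t(2)[of k] by (simp add: R_def linear_simps(5)[OF bl] scaleR_diff_right algebra_simps)
  ultimately show ?thesis
    using tendsto_add[OF bounded_linear.tendsto[OF bl z]] by fastforce
qed

text \<open>The two second-order tangent sets use the step sizes \<open>s = t\<^sup>2/2\<close> and \<open>s = t r/2\<close>;
  in both the ratio \<open>t\<^sup>2/(2s)\<close> converges (to \<open>1\<close>, resp. \<open>0\<close>), which decides the weight
  of the second derivative in the limit.\<close>

lemma second_order_quotient_tendsto:
  fixes F :: "'a::real_normed_vector \<Rightarrow> 'c::real_normed_vector"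
    and DF :: "'a \<Rightarrow> ('a \<Rightarrow>\<^sub>L 'c)" and D2 :: "'a \<Rightarrow>\<^sub>L ('a \<Rightarrow>\<^sub>L 'c)"
  assumes dF: "\<And>y. (F has_derivative blinfun_apply (DF y)) (at y)"
    and d2F: "(DF has_derivative blinfun_apply D2) (at x)"
    and t: "t \<longlonglongrightarrow> 0" "\<And>k. t k > 0" and s: "\<And>k. s k > 0"
    and st: "(\<lambda>k. s k / t k) \<longlonglongrightarrow> 0" and c: "(\<lambda>k. (t k)\<^sup>2 / (2 * s k)) \<longlonglongrightarrow> c"
    and z: "zk \<longlonglongrightarrow> z"
  shows "(\<lambda>k. inverse (s k) *\<^sub>R (F (x + t k *\<^sub>R d + s k *\<^sub>R zk k) - F x - t k *\<^sub>R DF x d))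
           \<longlonglongrightarrow> DF x z + c *\<^sub>R D2 d d"
proof -
  define R where "R h = F (x + h) - F x - DF x h - (1/2) *\<^sub>R D2 h h" for h
  define q where "q k = d + (s k / t k) *\<^sub>R zk k" for k
  have q: "q \<longlonglongrightarrow> d"
    unfolding q_def using tendsto_add[OF tendsto_const tendsto_scaleR[OF st z], of d] by simp
  have "(\<lambda>k. inverse (t k ^ 2) *\<^sub>R R (t k *\<^sub>R q k)) \<longlonglongrightarrow> 0"
    using second_order_taylor_bound[OF dF d2F, folded R_def] tendsto_scaleR[OF t(1) q]
    by (intro remainder_quotient_tendsto_zero[OF _ _ scaled_convergent_norm_bound[OF q t(2)] t(2)])
      auto
  from tendsto_scaleR[OF tendsto_mult[OF tendsto_const c] this, of 2]
  have rem: "(\<lambda>k. (2 * ((t k)\<^sup>2 / (2 * s k))) *\<^sub>R (inverse (t k ^ 2) *\<^sub>R R (t k *\<^sub>R q k)))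
      \<longlonglongrightarrow> 0"
    by simp
  have quad: "(\<lambda>k. ((t k)\<^sup>2 / (2 * s k)) *\<^sub>R D2 (q k) (q k)) \<longlonglongrightarrow> c *\<^sub>R D2 d d"
    using tendsto_scaleR[OF c blinfun.tendsto[OF blinfun.tendsto[OF tendsto_const q] q]] .
  have "inverse (s k) *\<^sub>R (F (x + t k *\<^sub>R d + s k *\<^sub>R zk k) - F x - t k *\<^sub>R DF x d)
      = DF x (zk k) + ((t k)\<^sup>2 / (2 * s k)) *\<^sub>R D2 (q k) (q k)
        + (2 * ((t k)\<^sup>2 / (2 * s k))) *\<^sub>R (inverse (t k ^ 2) *\<^sub>R R (t k *\<^sub>R q k))" for k
  proof -
    have tk: "t k \<noteq> 0" and sk: "s k \<noteq> 0" using t(2)[of k] s[of k] by auto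
    have hq: "t k *\<^sub>R q k = t k *\<^sub>R d + s k *\<^sub>R zk k"
      using tk by (simp add: q_def scaleR_add_right)
    have "(1/2) *\<^sub>R D2 (t k *\<^sub>R q k) (t k *\<^sub>R q k) = ((t k)\<^sup>2 / 2) *\<^sub>R D2 (q k) (q k)"
      by (simp add: blinfun.scaleR_right blinfun.scaleR_left power2_eq_square)
    moreover have "DF x (t k *\<^sub>R q k) = t k *\<^sub>R DF x d + s k *\<^sub>R DF x (zk k)"
      by (simp add: hq blinfun.add_right blinfun.scaleR_right)
    ultimately have "F (x + t k *\<^sub>R d + s k *\<^sub>R zk k) - F x - t k *\<^sub>R DF x d
        = s k *\<^sub>R DF x (zk k) + ((t k)\<^sup>2 / 2) *\<^sub>R D2 (q k) (q k) + R (t k *\<^sub>R q k)"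
      unfolding R_def by (simp add: hq add.assoc)
    then show ?thesis
      using tk sk by (simp add: scaleR_add_right field_simps power2_eq_square)
  qed
  then show ?thesis
    using tendsto_add[OF tendsto_add[OF blinfun.tendsto[OF tendsto_const z] quad] rem] by simp
qed

section \<open>Normal cones and separation\<close>

lemma nearest_point_in_frechet_normal_cone:
  fixes K :: "'b::real_inner set"
  assumes q: "q \<in> K" and nearest: "\<And>y. y \<in> K \<Longrightarrow> dist p q \<le> dist p y"
  shows "p - q \<in> frechet_normal_cone K q"
proof -
  have "\<exists>r>0. \<forall>y'\<in>K. y' \<noteq> q \<and> norm (y' - q) < r \<longrightarrow> inner (p - q) (y' - q) / norm (y' - q) \<le> e"
    if e: "e > 0" for e
  proof (intro exI[of _ "2 * e"] conjI ballI impI)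
    fix y' assume y': "y' \<in> K" "y' \<noteq> q \<and> norm (y' - q) < 2 * e"
    have "(norm (p - q))\<^sup>2 \<le> (norm ((p - q) - (y' - q)))\<^sup>2"
      using nearest[OF y'(1)] by (simp add: dist_norm power_mono)
    then have "2 * inner (p - q) (y' - q) \<le> (norm (y' - q))\<^sup>2"
      by (simp add: power2_norm_eq_inner inner_diff_left inner_diff_right inner_commute)
    then have "inner (p - q) (y' - q) \<le> norm (y' - q) * (norm (y' - q) / 2)"
      by (simp add: power2_eq_square)
    also have "\<dots> \<le> norm (y' - q) * e" using y' by (intro mult_left_mono) auto
    finally show "inner (p - q) (y' - q) / norm (y' - q) \<le> e"
      using y' by (simp add: divide_le_eq mult.commute)
  qed (use e in simp)
  then show ?thesis using q by (simp add: frechet_normal_cone_def)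
qed

lemma frechet_normal_cone_scaleR:
  fixes K :: "'b::real_inner set"
  assumes v: "v \<in> frechet_normal_cone K y" and s: "s \<ge> 0"
  shows "s *\<^sub>R v \<in> frechet_normal_cone K y"
proof -
  have yK: "y \<in> K" using v by (simp add: frechet_normal_cone_def split: if_splits)
  have "\<exists>r>0. \<forall>y'\<in>K. y' \<noteq> y \<and> norm (y' - y) < r \<longrightarrow> s * (inner v (y' - y) / norm (y' - y)) \<le> e"
    if e: "e > 0" for e
  proof (cases "s = 0")
    case False
    with s e have "e / s > 0" by simp
    with v yK obtain r where "r > 0"
      "\<forall>y'\<in>K. y' \<noteq> y \<and> norm (y' - y) < r \<longrightarrow> inner v (y' - y) / norm (y' - y) \<le> e / s"
      by (auto simp: frechet_normal_cone_def)
    with s False show ?thesis by (auto simp: field_simps)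
  qed (use e in auto)
  then show ?thesis using yK by (simp add: frechet_normal_cone_def)
qed

lemma nearest_point_unit_normal:
  fixes K :: "'b::real_inner set"
  assumes q: "q \<in> K" and nearest: "\<And>y. y \<in> K \<Longrightarrow> dist p q \<le> dist p y" and p: "p \<notin> K"
  shows "inverse (dist p q) *\<^sub>R (p - q) \<in> frechet_normal_cone K q"
    and "norm (inverse (dist p q) *\<^sub>R (p - q)) = 1"
proof -
  have "p \<noteq> q" using p q by auto
  then show "norm (inverse (dist p q) *\<^sub>R (p - q)) = 1" by (simp add: dist_norm)
  show "inverse (dist p q) *\<^sub>R (p - q) \<in> frechet_normal_cone K q"
    using nearest_point_in_frechet_normal_cone[OF q nearest] by (simp add: frechet_normal_cone_scaleR)
qed

lemma dir_normal_coneI: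
  fixes K :: "'b::real_inner set"
  assumes t: "t \<longlonglongrightarrow> 0" "\<And>k. t k > 0"
    and pu: "(\<lambda>k. inverse (t k) *\<^sub>R (p k - y)) \<longlonglongrightarrow> u"
    and n: "\<And>k. n k \<in> frechet_normal_cone K (p k)" and nl: "n \<longlonglongrightarrow> l"
  shows "l \<in> dir_normal_cone K y u"
proof -
  have "y + t k *\<^sub>R (inverse (t k) *\<^sub>R (p k - y)) = p k" for k
    using t(2)[of k] by simp
  then show ?thesis unfolding dir_normal_cone_def
    using t pu n nl
    by (intro CollectI exI[of _ t] exI[of _ "\<lambda>k. inverse (t k) *\<^sub>R (p k - y)"] exI[of _ n]) auto
qed

lemma cone_dir_normal_cone: "cone (dir_normal_cone K y u)"
  unfolding cone_def
proof (intro ballI allI impI)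
  fix v and c :: real assume "v \<in> dir_normal_cone K y u" "c \<ge> 0"
  then obtain t uk vk where "\<forall>k. t k > 0" "t \<longlonglongrightarrow> 0" "uk \<longlonglongrightarrow> u" "vk \<longlonglongrightarrow> v"
    "\<forall>k. vk k \<in> frechet_normal_cone K (y + t k *\<^sub>R uk k)"
    by (auto simp: dir_normal_cone_def)
  with \<open>c \<ge> 0\<close> show "c *\<^sub>R v \<in> dir_normal_cone K y u"
    unfolding dir_normal_cone_def
    by (intro CollectI exI[of _ t] exI[of _ uk] exI[of _ "\<lambda>k. c *\<^sub>R vk k"])
      (auto intro: frechet_normal_cone_scaleR tendsto_scaleR)
qed

lemma zero_in_dir_normal_cone:
  assumes "u \<in> tangent_cone K y"
  shows "0 \<in> dir_normal_cone K y u"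
proof -
  from assms obtain t dk where "\<forall>k. t k > 0" "t \<longlonglongrightarrow> 0" "dk \<longlonglongrightarrow> u" "\<forall>k. y + t k *\<^sub>R dk k \<in> K"
    by (auto simp: tangent_cone_def)
  then show ?thesis unfolding dir_normal_cone_def
    by (intro CollectI exI[of _ t] exI[of _ dk] exI[of _ "\<lambda>k. 0"])
      (auto simp: frechet_normal_cone_def)
qed

lemma dir_normal_cone_subset_conv: "dir_normal_cone K y u \<subseteq> conv_dir_normal_cone K y u"
  unfolding conv_dir_normal_cone_def by (meson closure_subset hull_subset subset_trans)

lemma closed_conv_dir_normal_cone: "closed (conv_dir_normal_cone K y u)"
  by (simp add: conv_dir_normal_cone_def)

lemma convex_cone_conv_dir_normal_cone:
  fixes K :: "'b::euclidean_space set"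
  assumes "u \<in> tangent_cone K y"
  shows "convex_cone (conv_dir_normal_cone K y u)"
proof -
  have "0 \<in> conv_dir_normal_cone K y u"
    using dir_normal_cone_subset_conv zero_in_dir_normal_cone[OF assms] by blast
  moreover have "cone (conv_dir_normal_cone K y u)"
    unfolding conv_dir_normal_cone_def
    by (intro cone_closure cone_convex_hull cone_dir_normal_cone)
  ultimately show ?thesis
    unfolding convex_cone_def conic_def cone_def conv_dir_normal_cone_def by auto
qed

lemma ray_bounded_below_imp_nonneg:
  fixes a b c :: real
  assumes "\<And>\<sigma>. \<sigma> \<ge> 0 \<Longrightarrow> b \<le> \<sigma> * a + c"
  shows "0 \<le> a"
proof (rule ccontr)
  assume "\<not> 0 \<le> a"
  define \<sigma> where "\<sigma> = (\<bar>b\<bar> + \<bar>c\<bar> + 1) / (- a)"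
  have "\<sigma> \<ge> 0" "\<sigma> * a = - (\<bar>b\<bar> + \<bar>c\<bar> + 1)"
    using \<open>\<not> 0 \<le> a\<close> by (simp_all add: \<sigma>_def divide_nonneg_neg)
  then show False using assms[of \<sigma>] by linarith
qed

lemma line_bounded_below_imp_zero:
  fixes a b c :: real
  assumes "\<And>\<sigma>. b \<le> \<sigma> * a + c"
  shows "a = 0"
proof -
  have "0 \<le> a" by (rule ray_bounded_below_imp_nonneg) (rule assms)
  moreover have "0 \<le> - a"
  proof (rule ray_bounded_below_imp_nonneg[of b _ c])
    fix \<sigma> :: real show "b \<le> \<sigma> * - a + c" using assms[of "- \<sigma>"] by simp
  qed
  ultimately show ?thesis by simp
qed

lemma mem_closed_convex_cone_by_polar:
  fixes C :: "'b::euclidean_space set"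
  assumes "closed C" "convex_cone C"
    and polar: "\<And>v. (\<forall>n\<in>C. inner n v \<le> 0) \<Longrightarrow> inner \<mu> v \<le> 0"
  shows "\<mu> \<in> C"
proof (rule ccontr)
  assume "\<mu> \<notin> C"
  moreover have "convex C" using assms(2) by (simp add: convex_cone_def)
  ultimately obtain c b where c: "inner c \<mu> < b" "\<forall>x\<in>C. inner c x > b"
    using separating_hyperplane_closed_point[OF _ assms(1)] by blast
  have "b < 0" using c(2) convex_cone_contains_0[OF assms(2)] by auto
  have "inner c x \<ge> 0" if "x \<in> C" for x
  proof (rule ccontr)
    assume neg: "\<not> inner c x \<ge> 0"
    then have "(b / inner c x) *\<^sub>R x \<in> C"
      using convex_cone_scaleR[OF assms(2) _ that] \<open>b < 0\<close> by (simp add: divide_nonpos_neg)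
    then have "inner c ((b / inner c x) *\<^sub>R x) > b" using c(2) by blast
    then show False using neg by simp
  qed
  then have "inner \<mu> (- c) \<le> 0" by (intro polar) (simp add: inner_commute)
  moreover have "inner \<mu> c < 0" using c(1) \<open>b < 0\<close> by (simp add: inner_commute)
  ultimately show False by simp
qed

lemma separate_from_negative_ray:
  fixes M :: "('b::euclidean_space \<times> real) set"
  assumes M: "convex M" "M \<noteq> {}" and no_ray: "\<And>s. s < 0 \<Longrightarrow> (0, s) \<notin> M"
  obtains \<mu> \<beta> where "(\<mu>, \<beta>) \<noteq> 0" "\<beta> \<ge> 0" "\<And>v r. (v, r) \<in> M \<Longrightarrow> 0 \<le> inner \<mu> v + \<beta> * r"
proof -
  define R where "R = {(0::'b, s) | s::real. s < 0}"
  have "convex R"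
    unfolding convex_def R_def
  proof (intro ballI allI impI)
    fix x y :: "'b \<times> real" and u v :: real
    assume "x \<in> {(0, s) | s. s < 0}" "y \<in> {(0, s) | s. s < 0}" and uv: "0 \<le> u" "0 \<le> v" "u + v = 1"
    then obtain s1 s2 :: real where "x = (0, s1)" "y = (0, s2)" "s1 < 0" "s2 < 0" by blast
    moreover have "u * s1 + v * s2 < 0"
      using uv \<open>s1 < 0\<close> \<open>s2 < 0\<close> by (smt (verit) mult_nonneg_nonpos mult_pos_neg)
    ultimately show "u *\<^sub>R x + v *\<^sub>R y \<in> {(0, s) | s. s < 0}" by simp
  qed
  moreover have "R \<noteq> {}" unfolding R_def by (auto intro: exI[of _ "-1"])
  moreover have "R \<inter> M = {}" using no_ray unfolding R_def by blast
  ultimately obtain c b where cb: "c \<noteq> 0" "\<forall>x\<in>R. inner c x \<le> b" "\<forall>x\<in>M. inner c x \<ge> b"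
    using separating_hyperplane_sets[OF _ M(1) _ M(2)] by blast
  obtain \<mu> \<beta> where c: "c = (\<mu>, \<beta>)" by fastforce
  have Rb: "\<beta> * s \<le> b" if "s < 0" for s
    using cb(2) that unfolding R_def c by (auto simp: inner_Pair)
  have \<beta>: "\<beta> \<ge> 0"
  proof (rule ray_bounded_below_imp_nonneg[of 0 _ "\<beta> + b"])
    fix \<sigma> :: real assume "\<sigma> \<ge> 0"
    then have "\<beta> * (- (\<sigma> + 1)) \<le> b" by (intro Rb) simp
    then show "0 \<le> \<sigma> * \<beta> + (\<beta> + b)" by (simp add: algebra_simps)
  qed
  have "b \<ge> 0"
  proof (rule ccontr)
    assume "\<not> b \<ge> 0"
    then have "\<beta> * (b / (\<beta> + 1)) \<le> b" using \<beta> by (intro Rb) (simp add: divide_neg_pos)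
    then have "\<beta> * b \<le> b * (\<beta> + 1)" using \<beta> by (simp add: pos_divide_le_eq)
    then show False using \<open>\<not> b \<ge> 0\<close> by (simp add: algebra_simps)
  qed
  then have "0 \<le> inner \<mu> v + \<beta> * r" if "(v, r) \<in> M" for v r
    using cb(3) that unfolding c by (force simp: inner_Pair)
  with that cb(1) c \<beta> show ?thesis by blast
qed

lemma convex_linearised_image:
  fixes A :: "'a::real_normed_vector \<Rightarrow>\<^sub>L 'b::real_normed_vector" and a :: "'a \<Rightarrow>\<^sub>L real"
  assumes W: "convex W" and P: "convex P"
  shows "convex {(A z + h - w - v, a z + e + r) | z w v r. w \<in> W \<and> v \<in> P \<and> r \<ge> 0}"
  unfolding convex_def
proof (intro ballI allI impI)
  fix x y :: "'b \<times> real" and u v :: real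
  assume "x \<in> {(A z + h - w - v, a z + e + r) | z w v r. w \<in> W \<and> v \<in> P \<and> r \<ge> 0}"
    "y \<in> {(A z + h - w - v, a z + e + r) | z w v r. w \<in> W \<and> v \<in> P \<and> r \<ge> 0}"
    and uv: "0 \<le> u" "0 \<le> v" "u + v = 1"
  then obtain z1 w1 v1 r1 z2 w2 v2 r2
    where 1: "x = (A z1 + h - w1 - v1, a z1 + e + r1)" "w1 \<in> W" "v1 \<in> P" "r1 \<ge> 0"
      and 2: "y = (A z2 + h - w2 - v2, a z2 + e + r2)" "w2 \<in> W" "v2 \<in> P" "r2 \<ge> 0"
    by blast
  have v: "v = 1 - u" using uv(3) by simp
  have "u *\<^sub>R w1 + v *\<^sub>R w2 \<in> W" using W 1(2) 2(2) uv unfolding convex_def by blast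
  moreover have "u *\<^sub>R v1 + v *\<^sub>R v2 \<in> P" using P 1(3) 2(3) uv unfolding convex_def by blast
  moreover have "u * r1 + v * r2 \<ge> 0" using uv 1(4) 2(4) by simp
  moreover have "u *\<^sub>R x + v *\<^sub>R y = (A (u *\<^sub>R z1 + v *\<^sub>R z2) + h - (u *\<^sub>R w1 + v *\<^sub>R w2)
      - (u *\<^sub>R v1 + v *\<^sub>R v2), a (u *\<^sub>R z1 + v *\<^sub>R z2) + e + (u * r1 + v * r2))"
    unfolding 1(1) 2(1) v
    by (simp add: blinfun.add_right blinfun.scaleR_right blinfun.diff_right scaleR_diff_right
        scaleR_add_right scaleR_diff_left algebra_simps)
  ultimately show "u *\<^sub>R x + v *\<^sub>R y \<in> {(A z + h - w - v, a z + e + r) | z w v r. w \<in> W \<and> v \<in> P \<and> r \<ge> 0}"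
    by blast
qed

text \<open>The hypothesis says that the linearised problem has no descent direction. Separating
  its image from the open negative ray produces a multiplier in \<open>C\<close>; the qualification
  condition rules out a zero coefficient in front of the objective.\<close>

lemma multiplier_by_separation:
  fixes A :: "'a::euclidean_space \<Rightarrow>\<^sub>L 'b::euclidean_space" and a :: "'a \<Rightarrow>\<^sub>L real"
  assumes C: "closed C" "convex_cone C"
    and qual: "\<And>l. l \<in> C \<Longrightarrow> (\<forall>v. inner (A v) l = 0) \<Longrightarrow> l = 0"
    and W: "convex W" "W \<noteq> {}"
    and primal: "\<And>z w. w \<in> W \<Longrightarrow> (\<forall>n\<in>C. inner n (A z + h - w) \<le> 0) \<Longrightarrow> a z + e \<ge> 0"
  shows "\<exists>l\<in>C. (\<forall>v. a v + inner (A v) l = 0) \<and> (\<forall>w\<in>W. e + inner l (h - w) \<ge> 0)"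
proof -
  define P where "P = {v. \<forall>n\<in>C. inner n v \<le> 0}"
  have P0: "0 \<in> P" by (simp add: P_def)
  have Pscale: "s *\<^sub>R v \<in> P" if "v \<in> P" "s \<ge> 0" for v s
    using that by (auto simp: P_def mult_nonneg_nonpos)
  define M where "M = {(A z + h - w - v, a z + e + r) | z w v r. w \<in> W \<and> v \<in> P \<and> r \<ge> 0}"
  have "convex P"
    by (auto simp: P_def convex_def inner_add_right intro!: add_nonpos_nonpos mult_nonneg_nonpos)
  then have "convex M" unfolding M_def by (rule convex_linearised_image[OF W(1)])
  moreover obtain w0 where w0: "w0 \<in> W" using W(2) by blast
  then have "M \<noteq> {}" unfolding M_def using P0 by blast
  moreover have "(0, s) \<notin> M" if "s < 0" for s
  proof
    assume "(0, s) \<in> M"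
    then obtain z w v r where "(0, s) = (A z + h - w - v, a z + e + r)" "w \<in> W" "v \<in> P" "r \<ge> 0"
      unfolding M_def by blast
    moreover from this(1) have "v = A z + h - w" by (simp add: algebra_simps)
    ultimately show False using primal[of w z] that by (auto simp: P_def)
  qed
  ultimately obtain \<mu> \<beta> where nonzero: "(\<mu>, \<beta>) \<noteq> 0" and \<beta>: "\<beta> \<ge> 0"
    and sep: "\<And>v r. (v, r) \<in> M \<Longrightarrow> 0 \<le> inner \<mu> v + \<beta> * r"
    using separate_from_negative_ray by blast
  have Mb: "0 \<le> inner \<mu> (A z + h - w - v) + \<beta> * (a z + e + r)"
    if "w \<in> W" "v \<in> P" "r \<ge> 0" for z w v r
    using sep that unfolding M_def by blast
  have \<mu>C: "\<mu> \<in> C"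
  proof (rule mem_closed_convex_cone_by_polar[OF C])
    fix v assume "\<forall>n\<in>C. inner n v \<le> 0"
    then have "v \<in> P" by (simp add: P_def)
    have "0 \<le> \<sigma> * (- inner \<mu> v) + (inner \<mu> (h - w0) + \<beta> * e)" if "\<sigma> \<ge> 0" for \<sigma>
      using Mb[OF w0 Pscale[OF \<open>v \<in> P\<close> that], where z=0 and r=0]
      by (simp add: inner_diff_right algebra_simps)
    then show "inner \<mu> v \<le> 0" using ray_bounded_below_imp_nonneg by fastforce
  qed
  have lin: "inner \<mu> (A z) + \<beta> * a z = 0" for z
  proof (rule line_bounded_below_imp_zero)
    fix \<sigma>
    show "0 \<le> \<sigma> * (inner \<mu> (A z) + \<beta> * a z) + (inner \<mu> (h - w0) + \<beta> * e)"
      using Mb[OF w0 P0, where z="\<sigma> *\<^sub>R z" and r=0]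
      by (simp add: blinfun.scaleR_right inner_diff_right inner_add_right algebra_simps)
  qed
  have "\<beta> > 0"
  proof (rule ccontr)
    assume "\<not> \<beta> > 0"
    then have "\<beta> = 0" using \<beta> by simp
    then have "\<mu> = 0" using lin qual \<mu>C by (simp add: inner_commute)
    then show False using nonzero \<open>\<beta> = 0\<close> by (simp add: zero_prod_def)
  qed
  define l where "l = inverse \<beta> *\<^sub>R \<mu>"
  have "l \<in> C" unfolding l_def using convex_cone_scaleR[OF C(2) _ \<mu>C] \<open>\<beta> > 0\<close> by simp
  moreover have "a v + inner (A v) l = 0" for v
    using lin[of v] \<open>\<beta> > 0\<close> by (simp add: l_def inner_commute field_simps)
  moreover have "e + inner l (h - w) \<ge> 0" if "w \<in> W" for w
  proof -
    have "0 \<le> inner \<mu> (h - w) + \<beta> * e" using Mb[OF that P0, where z=0 and r=0] by simp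
    then have "0 \<le> inverse \<beta> * (inner \<mu> (h - w) + \<beta> * e)" using \<open>\<beta> > 0\<close> by simp
    also have "\<dots> = e + inner l (h - w)"
      using \<open>\<beta> > 0\<close> by (simp add: l_def distrib_left)
    finally show ?thesis .
  qed
  ultimately show ?thesis by blast
qed

section \<open>Distance to a closed set along polar directions\<close>

lemma norm_add_scaleR_le_of_inner_le:
  fixes a v :: "'b::real_inner"
  assumes a: "norm a > 0" and av: "inner a v \<le> \<eta> * norm a" and \<eta>: "\<eta> \<ge> 0" and \<delta>: "\<delta> \<ge> 0"
  shows "norm (a + \<delta> *\<^sub>R v) \<le> norm a + \<eta> * \<delta> + \<delta>\<^sup>2 * (norm v)\<^sup>2 / (2 * norm a)"
proof (rule power2_le_imp_le)
  define c where "c = \<delta>\<^sup>2 * (norm v)\<^sup>2 / (2 * norm a)"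
  have c: "c \<ge> 0" "2 * norm a * c = \<delta>\<^sup>2 * (norm v)\<^sup>2" using a by (simp_all add: c_def)
  have "(norm (a + \<delta> *\<^sub>R v))\<^sup>2 = (norm a)\<^sup>2 + 2 * \<delta> * inner a v + \<delta>\<^sup>2 * (norm v)\<^sup>2"
    unfolding power2_norm_eq_inner
    by (simp add: inner_add_left inner_add_right inner_commute power2_eq_square algebra_simps)
  also have "\<dots> \<le> (norm a)\<^sup>2 + 2 * \<delta> * (\<eta> * norm a) + \<delta>\<^sup>2 * (norm v)\<^sup>2"
    using av \<delta> by (simp add: mult_left_mono)
  also have "\<dots> \<le> (norm a + \<eta> * \<delta> + c)\<^sup>2"
    using c \<eta> \<delta> by (simp add: power2_eq_square algebra_simps)
  finally show "(norm (a + \<delta> *\<^sub>R v))\<^sup>2 \<le> (norm a + \<eta> * \<delta> + \<delta>\<^sup>2 * (norm v)\<^sup>2 / (2 * norm a))\<^sup>2"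
    by (simp add: c_def)
  show "0 \<le> norm a + \<eta> * \<delta> + \<delta>\<^sup>2 * (norm v)\<^sup>2 / (2 * norm a)"
    using a \<eta> \<delta> by simp
qed

lemma infdist_forward_step:
  fixes K :: "'b::euclidean_space set"
  assumes K: "closed K" "K \<noteq> {}" and P: "P \<notin> K"
    and angle: "\<And>\<pi>. \<pi> \<in> K \<Longrightarrow> dist P \<pi> = infdist P K \<Longrightarrow> inner (P - \<pi>) v \<le> \<eta> * dist P \<pi>"
    and \<eta>: "\<eta> \<ge> 0" and \<delta>: "\<delta> \<ge> 0"
  shows "infdist (P + \<delta> *\<^sub>R v) K
           \<le> infdist P K + \<eta> * \<delta> + \<delta>\<^sup>2 * (norm v)\<^sup>2 / (2 * infdist P K)"
proof -
  obtain \<pi> where \<pi>: "\<pi> \<in> K" "infdist P K = dist P \<pi>"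
    using infdist_attains_inf[OF K] by metis
  have "infdist P K > 0" using infdist_pos_not_in_closed[OF K P] .
  then have "norm (P - \<pi> + \<delta> *\<^sub>R v) \<le> infdist P K + \<eta> * \<delta> + \<delta>\<^sup>2 * (norm v)\<^sup>2 / (2 * infdist P K)"
    using norm_add_scaleR_le_of_inner_le[of "P - \<pi>" v \<eta> \<delta>] angle[OF \<pi>(1) \<pi>(2)[symmetric]] \<pi>(2) \<eta> \<delta>
    by (simp add: dist_norm)
  moreover have "infdist (P + \<delta> *\<^sub>R v) K \<le> norm (P - \<pi> + \<delta> *\<^sub>R v)"
    using infdist_le[OF \<pi>(1)] by (simp add: dist_norm algebra_simps)
  ultimately show ?thesis by linarith
qed

lemma exists_small_step:
  fixes T \<gamma> \<eta> a b :: real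
  assumes "T > 0" "\<gamma> > 0" "\<eta> > 0" "a \<ge> 0" "b \<ge> 0"
  obtains \<delta> where "\<delta> > 0" "\<delta> \<le> T / 2" "\<delta> * a \<le> \<gamma> / 2" "\<delta> * b \<le> \<eta> * \<gamma> / 2"
proof
  define \<delta> where "\<delta> = min (T / 2) (min (\<gamma> / (2 * a + 2)) (\<eta> * \<gamma> / (2 * b + 2)))"
  show "\<delta> > 0" using assms by (simp add: \<delta>_def add_nonneg_pos)
  show "\<delta> \<le> T / 2" unfolding \<delta>_def by (rule min.cobounded1)
  have "\<delta> \<le> \<gamma> / (2 * a + 2)" "\<delta> \<le> \<eta> * \<gamma> / (2 * b + 2)"
    unfolding \<delta>_def by (intro min.coboundedI2 min.cobounded1 min.cobounded2)+
  then have "\<delta> * (2 * a + 2) \<le> \<gamma>" "\<delta> * (2 * b + 2) \<le> \<eta> * \<gamma>"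
    using assms by (simp_all only: pos_le_divide_eq add_nonneg_pos mult_nonneg_nonneg
        zero_less_numeral zero_le_numeral)
  then show "\<delta> * a \<le> \<gamma> / 2" "\<delta> * b \<le> \<eta> * \<gamma> / 2"
    using \<open>\<delta> > 0\<close> by (simp_all add: algebra_simps)
qed

text \<open>Look at the first parameter \<open>T\<close> at which the distance reaches \<open>2\<eta>\<tau> + \<gamma>\<close> and step forward
  to it from slightly below.\<close>

lemma infdist_ray_le_of_angle_le:
  fixes K :: "'b::euclidean_space set"
  assumes K: "closed K" and p: "p \<in> K" and s: "s > 0" and \<eta>: "\<eta> > 0"
    and angle: "\<And>\<tau> \<pi>. \<tau> \<in> {0..s} \<Longrightarrow> \<pi> \<in> K \<Longrightarrow> p + \<tau> *\<^sub>R v \<notin> K \<Longrightarrow>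
                  dist (p + \<tau> *\<^sub>R v) \<pi> = infdist (p + \<tau> *\<^sub>R v) K \<Longrightarrow>
                  inner (p + \<tau> *\<^sub>R v - \<pi>) v \<le> \<eta> * dist (p + \<tau> *\<^sub>R v) \<pi>"
  shows "infdist (p + s *\<^sub>R v) K \<le> 2 * \<eta> * s"
proof (rule field_le_epsilon)
  fix \<gamma> :: real assume \<gamma>: "\<gamma> > 0"
  define \<phi> where "\<phi> \<tau> = infdist (p + \<tau> *\<^sub>R v) K" for \<tau>
  have Kne: "K \<noteq> {}" using p by auto
  have lip: "\<bar>\<phi> a - \<phi> b\<bar> \<le> \<bar>a - b\<bar> * norm v" for a b
    using infdist_triangle_abs[of "p + a *\<^sub>R v" K "p + b *\<^sub>R v"]
    by (simp add: \<phi>_def dist_norm flip: scaleR_diff_left)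
  show "infdist (p + s *\<^sub>R v) K \<le> 2 * \<eta> * s + \<gamma>"
  proof (rule ccontr)
    assume neg: "\<not> ?thesis"
    define B where "B = {0..s} \<inter> {\<tau>. 2 * \<eta> * \<tau> + \<gamma> \<le> \<phi> \<tau>}"
    have "closed B"
      unfolding B_def \<phi>_def by (intro closed_Int closed_Collect_le continuous_intros)
    moreover have "s \<in> B" using neg s by (auto simp: B_def \<phi>_def)
    moreover have bdd: "bdd_below B" unfolding B_def by (auto intro: bdd_belowI[of _ 0])
    ultimately have "Inf B \<in> B" by (intro closed_contains_Inf) auto
    define T where "T = Inf B"
    have T: "0 \<le> T" "T \<le> s" "2 * \<eta> * T + \<gamma> \<le> \<phi> T"
      using \<open>Inf B \<in> B\<close> by (auto simp: B_def T_def)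
    have "T > 0"
      using T \<gamma> p by (cases "T = 0") (auto simp: \<phi>_def)
    obtain \<delta> where \<delta>: "\<delta> > 0" "\<delta> \<le> T / 2"
      and \<delta>v: "\<delta> * norm v \<le> \<gamma> / 2" "\<delta> * (norm v)\<^sup>2 \<le> \<eta> * \<gamma> / 2"
      using exists_small_step[OF \<open>T > 0\<close> \<gamma> \<eta>, of "norm v" "(norm v)\<^sup>2"] by auto
    define \<tau> where "\<tau> = T - \<delta>"
    have \<tau>: "0 \<le> \<tau>" "\<tau> < T" using \<delta> by (auto simp: \<tau>_def)
    then have "\<tau> \<notin> B" using cInf_lower[OF _ bdd, of \<tau>] by (force simp: T_def)
    then have \<phi>\<tau>: "\<phi> \<tau> < 2 * \<eta> * \<tau> + \<gamma>" using \<tau> T by (auto simp: B_def)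
    have "\<phi> T - \<phi> \<tau> \<le> \<delta> * norm v"
      using lip[of T \<tau>] \<delta>(1) by (simp add: \<tau>_def)
    moreover have "2 * \<eta> * T \<ge> 0" using T \<eta> by simp
    ultimately have "\<phi> \<tau> \<ge> \<gamma> / 2" using T(3) \<delta>v(1) by linarith
    then have out: "p + \<tau> *\<^sub>R v \<notin> K" using \<gamma> by (auto simp: \<phi>_def)
    have "infdist (p + \<tau> *\<^sub>R v + \<delta> *\<^sub>R v) K
        \<le> \<phi> \<tau> + \<eta> * \<delta> + \<delta>\<^sup>2 * (norm v)\<^sup>2 / (2 * \<phi> \<tau>)"
      unfolding \<phi>_def
      by (rule infdist_forward_step[OF K Kne out angle]) (use \<tau> T \<eta> \<delta> out in auto)
    moreover have "p + \<tau> *\<^sub>R v + \<delta> *\<^sub>R v = p + T *\<^sub>R v"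
      by (simp add: \<tau>_def algebra_simps)
    ultimately have "\<phi> T \<le> \<phi> \<tau> + \<eta> * \<delta> + \<delta>\<^sup>2 * (norm v)\<^sup>2 / (2 * \<phi> \<tau>)"
      by (simp add: \<phi>_def)
    moreover have "\<delta>\<^sup>2 * (norm v)\<^sup>2 / (2 * \<phi> \<tau>) \<le> \<eta> * \<delta> / 2"
    proof -
      have "\<delta>\<^sup>2 * (norm v)\<^sup>2 = \<delta> * (\<delta> * (norm v)\<^sup>2)" by (simp add: power2_eq_square)
      also have "\<dots> \<le> \<delta> * (\<eta> * \<gamma> / 2)" using \<delta>v \<delta> by (simp add: mult_left_mono)
      also have "\<dots> \<le> \<eta> * \<delta> / 2 * (2 * \<phi> \<tau>)"
        using \<open>\<phi> \<tau> \<ge> \<gamma> / 2\<close> \<eta> \<delta> by (simp add: mult_left_mono algebra_simps)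
      finally show ?thesis using \<open>\<phi> \<tau> \<ge> \<gamma> / 2\<close> \<gamma> by (simp add: divide_le_eq)
    qed
    moreover have "2 * \<eta> * \<tau> = 2 * \<eta> * T - 2 * (\<eta> * \<delta>)" by (simp add: \<tau>_def algebra_simps)
    moreover have "\<eta> * \<delta> > 0" using \<eta> \<delta> by simp
    ultimately show False using T(3) \<phi>\<tau> by linarith
  qed
qed

lemma unit_sequence_convergent_subseq:
  fixes n :: "nat \<Rightarrow> 'b::euclidean_space"
  assumes "\<And>k. norm (n k) = 1"
  obtains l r where "strict_mono r" "(n \<circ> r) \<longlonglongrightarrow> l" "norm l = 1"
proof -
  have "bounded (range n)" using assms by (auto simp: bounded_iff intro!: exI[of _ 1])
  then obtain l r where r: "strict_mono r" "(n \<circ> r) \<longlonglongrightarrow> l"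
    using bounded_imp_convergent_subsequence by blast
  moreover have "(\<lambda>k. norm ((n \<circ> r) k)) \<longlonglongrightarrow> norm l" using tendsto_norm[OF r(2)] .
  then have "norm l = 1" using assms LIMSEQ_unique[OF _ tendsto_const] by simp
  ultimately show ?thesis using that by blast
qed

lemma nearest_points_along_shift_tendsto:
  fixes K :: "'b::real_normed_vector set"
  assumes pK: "\<And>k. p k \<in> K" and t: "\<And>k. t k > 0"
    and pu: "(\<lambda>k. inverse (t k) *\<^sub>R (p k - y)) \<longlonglongrightarrow> u" and st: "(\<lambda>k. s k / t k) \<longlonglongrightarrow> 0"
    and \<tau>: "\<And>k. \<tau> k \<in> {0..s k}"
    and nearest: "\<And>k z. z \<in> K \<Longrightarrow> dist (p k + \<tau> k *\<^sub>R v) (\<pi> k) \<le> dist (p k + \<tau> k *\<^sub>R v) z"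
  shows "(\<lambda>k. inverse (t k) *\<^sub>R (\<pi> k - y)) \<longlonglongrightarrow> u"
proof -
  have "norm (inverse (t k) *\<^sub>R (\<pi> k - p k)) \<le> 2 * norm v * (s k / t k)" for k
  proof -
    have "dist (p k + \<tau> k *\<^sub>R v) (\<pi> k) \<le> \<tau> k * norm v"
      using nearest[OF pK, of k k] \<tau>[of k] by (simp add: dist_norm)
    then have "norm (\<pi> k - p k) \<le> \<tau> k * norm v + \<tau> k * norm v"
      using norm_triangle_ineq4[of "\<tau> k *\<^sub>R v" "p k + \<tau> k *\<^sub>R v - \<pi> k"] \<tau>[of k]
      by (simp add: dist_norm norm_minus_commute algebra_simps)
    also have "\<dots> \<le> 2 * norm v * s k" using \<tau>[of k] by (simp add: mult_left_mono)
    finally have "norm (\<pi> k - p k) / t k \<le> 2 * norm v * s k / t k"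
      using t[of k] by (simp add: divide_right_mono)
    then show ?thesis using t[of k] by (simp add: divide_inverse_commute)
  qed
  then have "eventually (\<lambda>k. norm (inverse (t k) *\<^sub>R (\<pi> k - p k)) \<le> 2 * norm v * (s k / t k))
      sequentially"
    by (intro always_eventually allI)
  moreover have "(\<lambda>k. 2 * norm v * (s k / t k)) \<longlonglongrightarrow> 0"
    using tendsto_mult[OF tendsto_const st, of "2 * norm v"] by simp
  ultimately have "(\<lambda>k. inverse (t k) *\<^sub>R (\<pi> k - p k)) \<longlonglongrightarrow> 0" by (rule Lim_null_comparison)
  from tendsto_add[OF pu this] show ?thesis by (simp flip: scaleR_add_right)
qed

text \<open>If the bound failed infinitely often, a limit of the unit projection residuals would be a
  directional normal \<open>l\<close> with \<open>\<langle>l, v\<rangle> \<ge> \<eta>\<close>.\<close>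

lemma eventually_projection_angle_le:
  fixes K :: "'b::euclidean_space set"
  assumes polar: "\<And>n. n \<in> dir_normal_cone K y u \<Longrightarrow> inner n v \<le> 0"
    and pK: "\<And>k. p k \<in> K" and t: "t \<longlonglongrightarrow> 0" "\<And>k. t k > 0"
    and pu: "(\<lambda>k. inverse (t k) *\<^sub>R (p k - y)) \<longlonglongrightarrow> u"
    and st: "(\<lambda>k. s k / t k) \<longlonglongrightarrow> 0" and \<eta>: "\<eta> > 0"
  shows "eventually (\<lambda>k. \<forall>\<tau>\<in>{0..s k}. \<forall>\<pi>\<in>K. p k + \<tau> *\<^sub>R v \<notin> K \<longrightarrow>
            dist (p k + \<tau> *\<^sub>R v) \<pi> = infdist (p k + \<tau> *\<^sub>R v) K \<longrightarrow>
            inner (p k + \<tau> *\<^sub>R v - \<pi>) v \<le> \<eta> * dist (p k + \<tau> *\<^sub>R v) \<pi>) sequentially"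
proof (rule ccontr)
  assume "\<not> ?thesis"
  then have "\<forall>N. \<exists>k\<ge>N. \<exists>\<tau> \<pi>. \<tau> \<in> {0..s k} \<and> \<pi> \<in> K \<and> p k + \<tau> *\<^sub>R v \<notin> K \<and>
      dist (p k + \<tau> *\<^sub>R v) \<pi> = infdist (p k + \<tau> *\<^sub>R v) K \<and>
      inner (p k + \<tau> *\<^sub>R v - \<pi>) v > \<eta> * dist (p k + \<tau> *\<^sub>R v) \<pi>"
    unfolding eventually_sequentially by (fastforce simp: not_le)
  then obtain kk \<tau> \<pi> where kk: "\<And>N. kk N \<ge> N"
    and \<tau>: "\<And>N. \<tau> N \<in> {0..s (kk N)}" and \<pi>K: "\<And>N. \<pi> N \<in> K"
    and out: "\<And>N. p (kk N) + \<tau> N *\<^sub>R v \<notin> K"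
    and nearest: "\<And>N. dist (p (kk N) + \<tau> N *\<^sub>R v) (\<pi> N) = infdist (p (kk N) + \<tau> N *\<^sub>R v) K"
    and bad: "\<And>N. inner (p (kk N) + \<tau> N *\<^sub>R v - \<pi> N) v > \<eta> * dist (p (kk N) + \<tau> N *\<^sub>R v) (\<pi> N)"
    by metis
  define P where "P N = p (kk N) + \<tau> N *\<^sub>R v" for N
  define n where "n N = inverse (dist (P N) (\<pi> N)) *\<^sub>R (P N - \<pi> N)" for N
  have nearest': "dist (P N) (\<pi> N) \<le> dist (P N) z" if "z \<in> K" for N z
    using nearest[of N] infdist_le[OF that] by (simp add: P_def)
  have nF: "n N \<in> frechet_normal_cone K (\<pi> N)" and nunit: "norm (n N) = 1" for N
    using nearest_point_unit_normal[OF \<pi>K nearest' out[folded P_def]] by (simp_all add: n_def)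
  have dpos: "dist (P N) (\<pi> N) > 0" for N using out[of N] \<pi>K[of N] by (auto simp: P_def)
  have ninner: "inner (n N) v > \<eta>" for N
  proof -
    have "inner (n N) v = inner (P N - \<pi> N) v / dist (P N) (\<pi> N)"
      by (simp add: n_def divide_inverse mult.commute)
    then show ?thesis using bad[of N] dpos[of N] by (simp add: P_def pos_less_divide_eq mult.commute)
  qed
  have kklim: "filterlim kk sequentially sequentially"
    by (rule filterlim_at_top_mono[OF filterlim_ident]) (use kk in \<open>auto intro: always_eventually\<close>)
  have \<pi>u: "(\<lambda>N. inverse (t (kk N)) *\<^sub>R (\<pi> N - y)) \<longlonglongrightarrow> u"
    by (rule nearest_points_along_shift_tendsto[where p="\<lambda>N. p (kk N)" and t="\<lambda>N. t (kk N)"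
          and s="\<lambda>N. s (kk N)" and \<tau>=\<tau> and \<pi>=\<pi> and v=v and K=K])
      (use pK t(2) \<tau> nearest' filterlim_compose[OF pu kklim] filterlim_compose[OF st kklim] in
        \<open>simp_all add: P_def o_def\<close>)
  obtain l r where r: "strict_mono r" "(n \<circ> r) \<longlonglongrightarrow> l"
    using unit_sequence_convergent_subseq[of n] nunit by blast
  have "l \<in> dir_normal_cone K y u"
  proof (rule dir_normal_coneI[where t="\<lambda>N. t (kk (r N))" and p="\<lambda>N. \<pi> (r N)" and n="n \<circ> r"])
    show "(\<lambda>N. t (kk (r N))) \<longlonglongrightarrow> 0"
      using LIMSEQ_subseq_LIMSEQ[OF filterlim_compose[OF t(1) kklim] r(1)] by (simp add: o_def)
    show "(\<lambda>N. inverse (t (kk (r N))) *\<^sub>R (\<pi> (r N) - y)) \<longlonglongrightarrow> u"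
      using LIMSEQ_subseq_LIMSEQ[OF \<pi>u r(1)] by (simp add: o_def)
  qed (use t(2) nF r(2) in auto)
  moreover have "inner l v \<ge> \<eta>"
    using ninner by (intro tendsto_lowerbound[OF tendsto_inner[OF r(2) tendsto_const]])
      (auto intro: always_eventually less_imp_le)
  ultimately show False using polar \<eta> by force
qed

lemma infdist_polar_shift_tendsto_zero:
  fixes K :: "'b::euclidean_space set"
  assumes K: "closed K" and polar: "\<And>n. n \<in> dir_normal_cone K y u \<Longrightarrow> inner n v \<le> 0"
    and pK: "\<And>k. p k \<in> K" and t: "t \<longlonglongrightarrow> 0" "\<And>k. t k > 0"
    and pu: "(\<lambda>k. inverse (t k) *\<^sub>R (p k - y)) \<longlonglongrightarrow> u"
    and s: "\<And>k. s k > 0" and st: "(\<lambda>k. s k / t k) \<longlonglongrightarrow> 0"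
  shows "(\<lambda>k. infdist (p k + s k *\<^sub>R v) K / s k) \<longlonglongrightarrow> 0"
proof (rule tendstoI)
  fix \<epsilon> :: real assume "\<epsilon> > 0"
  then have "\<epsilon> / 4 > 0" by simp
  have "eventually (\<lambda>k. \<forall>\<tau>\<in>{0..s k}. \<forall>\<pi>\<in>K. p k + \<tau> *\<^sub>R v \<notin> K \<longrightarrow>
            dist (p k + \<tau> *\<^sub>R v) \<pi> = infdist (p k + \<tau> *\<^sub>R v) K \<longrightarrow>
            inner (p k + \<tau> *\<^sub>R v - \<pi>) v \<le> \<epsilon> / 4 * dist (p k + \<tau> *\<^sub>R v) \<pi>) sequentially"
    by (rule eventually_projection_angle_le[OF polar pK t pu st \<open>\<epsilon> / 4 > 0\<close>])
  then show "eventually (\<lambda>k. dist (infdist (p k + s k *\<^sub>R v) K / s k) 0 < \<epsilon>) sequentially"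
  proof eventually_elim
    case (elim k)
    have "infdist (p k + s k *\<^sub>R v) K \<le> 2 * (\<epsilon> / 4) * s k"
      using elim \<open>\<epsilon> / 4 > 0\<close> by (intro infdist_ray_le_of_angle_le[OF K pK s]) auto
    then have "infdist (p k + s k *\<^sub>R v) K / s k \<le> \<epsilon> / 2"
      by (simp only: pos_divide_le_eq[OF s[of k]])
    moreover have "infdist (p k + s k *\<^sub>R v) K / s k \<ge> 0"
      using s[of k] by (simp add: infdist_nonneg)
    ultimately show ?case using \<open>\<epsilon> > 0\<close> by (simp only: dist_real_def diff_zero abs_of_nonneg)
  qed
qed

section \<open>Directional metric subregularity\<close>

lemma norm_sq_along_line_has_derivative:
  assumes "(g has_derivative blinfun_apply G) (at z)"
  shows "((\<lambda>\<sigma>. (norm (g (z + \<sigma> *\<^sub>R h) - q))\<^sup>2) has_real_derivative (2 * inner (g z - q) (G h))) (at 0)"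
proof -
  have "((\<lambda>\<sigma>. z + \<sigma> *\<^sub>R h) has_derivative (\<lambda>s. s *\<^sub>R h)) (at 0)"
    by (auto intro!: derivative_eq_intros)
  from has_derivative_compose[OF this, of g G] assms
  have gline: "((\<lambda>\<sigma>. g (z + \<sigma> *\<^sub>R h)) has_derivative (\<lambda>s. G (s *\<^sub>R h))) (at 0)"
    by (simp add: o_def)
  have "((\<lambda>\<sigma>. inner (g (z + \<sigma> *\<^sub>R h) - q) (g (z + \<sigma> *\<^sub>R h) - q)) has_derivative
      (\<lambda>s. inner (g z - q) (G (s *\<^sub>R h)) + inner (G (s *\<^sub>R h)) (g z - q))) (at 0)"
    by (rule has_derivative_eq_rhs, (rule derivative_intros gline)+) (auto simp: fun_eq_iff)
  then show ?thesis unfolding has_field_derivative_def power2_norm_eq_inner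
    by (rule has_derivative_eq_rhs) (auto simp: fun_eq_iff blinfun.scaleR_right inner_commute)
qed

text \<open>Hypothesis \<open>lower\<close> says that \<open>y\<close> locally minimises \<open>y' \<mapsto> \<parallel>g y' - q\<parallel> + \<beta> \<parallel>y' - y\<parallel>\<close>.\<close>

lemma residual_inner_derivative_lower_bound:
  assumes g_deriv: "(g has_derivative blinfun_apply G) (at y)"
    and \<rho>: "\<rho> > 0" and e: "e > 0" "e = norm (g y - q)" and \<beta>: "\<beta> > 0"
    and lower: "\<And>y'. norm (y' - y) < \<rho> \<Longrightarrow> e - \<beta> * norm (y' - y) \<le> norm (g y' - q)"
  shows "inner (g y - q) (G h) \<ge> - (e * \<beta> * norm h)"
proof -
  define \<psi> where "\<psi> \<sigma> = (norm (g (y + \<sigma> *\<^sub>R h) - q))\<^sup>2" for \<sigma>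
  have "(\<psi> has_real_derivative (2 * inner (g y - q) (G h))) (at 0)"
    unfolding \<psi>_def by (rule norm_sq_along_line_has_derivative[OF g_deriv])
  then have lim: "((\<lambda>\<sigma>. (\<psi> \<sigma> - \<psi> 0) / \<sigma>) \<longlongrightarrow> 2 * inner (g y - q) (G h)) (at_right 0)"
    using has_field_derivative_iff[of \<psi> _ 0 UNIV] by (simp add: filterlim_at_split)
  define \<sigma>0 where "\<sigma>0 = min (\<rho> / (norm h + 1)) (e / (\<beta> * (norm h + 1)))"
  have "\<sigma>0 > 0" unfolding \<sigma>0_def using \<rho> e \<beta> by (simp add: add_nonneg_pos)
  have "(\<psi> \<sigma> - \<psi> 0) / \<sigma> \<ge> - 2 * e * \<beta> * norm h" if \<sigma>: "\<sigma> \<in> {0<..<\<sigma>0}" for \<sigma>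
  proof -
    have "\<sigma> * (norm h + 1) < \<rho>" "\<sigma> * (\<beta> * (norm h + 1)) < e"
      using \<sigma> \<beta> by (simp_all add: \<sigma>0_def pos_less_divide_eq add_nonneg_pos)
    moreover have "\<beta> * \<sigma> > 0" using \<sigma> \<beta> by simp
    ultimately have small: "\<sigma> * norm h < \<rho>" "\<beta> * (\<sigma> * norm h) \<le> e"
      using \<sigma> by (simp_all add: algebra_simps)
    have "e - \<beta> * (\<sigma> * norm h) \<le> norm (g (y + \<sigma> *\<^sub>R h) - q)"
      using lower[of "y + \<sigma> *\<^sub>R h"] small \<sigma> by simp
    then have "(e - \<beta> * (\<sigma> * norm h))\<^sup>2 \<le> \<psi> \<sigma>"
      unfolding \<psi>_def using small by (intro power_mono) auto
    moreover have "e\<^sup>2 - 2 * e * (\<beta> * (\<sigma> * norm h)) \<le> (e - \<beta> * (\<sigma> * norm h))\<^sup>2"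
      by (simp add: power2_diff)
    moreover have "\<psi> 0 = e\<^sup>2" by (simp add: \<psi>_def e(2))
    ultimately have "- 2 * e * \<beta> * norm h * \<sigma> \<le> \<psi> \<sigma> - \<psi> 0" by (simp add: algebra_simps)
    then show ?thesis using \<sigma> by (simp add: le_divide_eq)
  qed
  then have "- 2 * e * \<beta> * norm h \<le> 2 * inner (g y - q) (G h)"
    by (intro tendsto_lowerbound[OF lim] eventually_mono[OF eventually_at_right_real[OF \<open>\<sigma>0 > 0\<close>]])
      simp_all
  then show ?thesis by (simp add: algebra_simps)
qed

lemma unit_residual_stationarity:
  assumes g_deriv: "(g has_derivative blinfun_apply G) (at y)"
    and \<rho>: "\<rho> > 0" and e: "e > 0" "e = norm (g y - q)" and \<beta>: "\<beta> > 0"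
    and lower: "\<And>y'. norm (y' - y) < \<rho> \<Longrightarrow> e - \<beta> * norm (y' - y) \<le> norm (g y' - q)"
  shows "\<bar>inner (inverse e *\<^sub>R (g y - q)) (G h)\<bar> \<le> \<beta> * norm h"
proof -
  have "- (\<beta> * norm k) \<le> inner (inverse e *\<^sub>R (g y - q)) (G k)" for k
  proof -
    have "e * inner (inverse e *\<^sub>R (g y - q)) (G k) = inner (g y - q) (G k)"
      using e(1) by simp
    then have "e * (- (\<beta> * norm k)) \<le> e * inner (inverse e *\<^sub>R (g y - q)) (G k)"
      using residual_inner_derivative_lower_bound[OF g_deriv \<rho> e \<beta> lower, of k]
      by (simp add: algebra_simps)
    then show ?thesis using e(1) by (rule mult_left_le_imp_le)
  qed
  from this[of h] this[of "- h"] show ?thesis by (simp add: blinfun.minus_right abs_le_iff)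
qed

text \<open>An Ekeland-type step: minimise \<open>dist(g y, K) + (2a/r) \<parallel>y - y0\<parallel>\<close> over the closed \<open>r\<close>-ball,
  where \<open>a = dist(g y0, K)\<close>. The minimiser lies inside the ball and outside the feasible set,
  and its first-order condition makes the unit projection normal almost stationary.\<close>

lemma approximately_stationary_normal:
  fixes g :: "'a::euclidean_space \<Rightarrow> 'b::euclidean_space" and Dg :: "'a \<Rightarrow> ('a \<Rightarrow>\<^sub>L 'b)"
  assumes g_deriv: "\<And>y. (g has_derivative blinfun_apply (Dg y)) (at y)"
    and K: "closed K" "K \<noteq> {}"
    and r: "0 < r" "r \<le> infdist y0 (feasible_set g K)"
    and a: "infdist (g y0) K > 0"
  obtains yh q n where "norm (yh - y0) < r" "n \<in> frechet_normal_cone K q" "norm n = 1"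
    "norm (g yh - q) \<le> infdist (g y0) K"
    "\<And>h. \<bar>inner n (Dg yh h)\<bar> \<le> (2 * infdist (g y0) K / r) * norm h"
proof -
  define a where "a = infdist (g y0) K"
  define \<beta> where "\<beta> = 2 * a / r"
  have "a > 0" "\<beta> > 0" using assms by (simp_all add: a_def \<beta>_def)
  define H where "H y = infdist (g y) K + \<beta> * norm (y - y0)" for y
  have "continuous_on UNIV g"
    using g_deriv by (meson continuous_on_eq_continuous_within has_derivative_continuous)
  then have "continuous_on (cball y0 r) H"
    unfolding H_def by (intro continuous_intros continuous_on_compose2[OF continuous_on_infdist[OF
          continuous_on_id] continuous_on_subset]) auto
  moreover have "cball y0 r \<noteq> {}" using r(1) by simp
  ultimately obtain yh where yh: "yh \<in> cball y0 r" "\<And>w. w \<in> cball y0 r \<Longrightarrow> H yh \<le> H w"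
    using continuous_attains_inf[OF compact_cball] by blast
  have "H yh \<le> a" using yh(2)[of y0] r(1) by (simp add: H_def a_def)
  have yh_r: "norm (yh - y0) < r"
  proof (rule ccontr)
    assume "\<not> ?thesis"
    then have "\<beta> * r \<le> H yh"
      using yh(1) infdist_nonneg[of "g yh" K] \<open>\<beta> > 0\<close> by (simp add: H_def dist_norm norm_minus_commute)
    then show False using \<open>H yh \<le> a\<close> \<open>a > 0\<close> r(1) by (simp add: \<beta>_def)
  qed
  have "g yh \<notin> K"
  proof
    assume "g yh \<in> K"
    then have "infdist y0 (feasible_set g K) \<le> dist y0 yh"
      by (intro infdist_le) (simp add: feasible_set_def)
    then show False using r yh_r by (simp add: dist_norm norm_minus_commute)
  qed
  obtain q where q: "q \<in> K" "infdist (g yh) K = dist (g yh) q"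
    using infdist_attains_inf[OF K] by metis
  define e where "e = norm (g yh - q)"
  have "e > 0" "e \<le> a"
    using infdist_pos_not_in_closed[OF K \<open>g yh \<notin> K\<close>] \<open>H yh \<le> a\<close> \<open>\<beta> > 0\<close> q(2)
    by (auto simp: e_def H_def dist_norm intro: order_trans[rotated])
  define n where "n = inverse (dist (g yh) q) *\<^sub>R (g yh - q)"
  have nearest: "dist (g yh) q \<le> dist (g yh) z" if "z \<in> K" for z
    using q(2) infdist_le[OF that, of "g yh"] by simp
  have n: "n \<in> frechet_normal_cone K q" "norm n = 1"
    using nearest_point_unit_normal[OF q(1) nearest \<open>g yh \<notin> K\<close>] by (simp_all add: n_def)
  have lower: "e - \<beta> * norm (y' - yh) \<le> norm (g y' - q)" if "norm (y' - yh) < r - norm (yh - y0)" for y'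
  proof -
    have "norm (y' - y0) \<le> norm (y' - yh) + norm (yh - y0)" by (rule norm_diff_triangle_le) auto
    then have "y' \<in> cball y0 r" using that by (simp add: dist_norm norm_minus_commute)
    then have "H yh \<le> H y'" by (rule yh(2))
    moreover have "\<beta> * norm (y' - y0) \<le> \<beta> * norm (y' - yh) + \<beta> * norm (yh - y0)"
      using \<open>norm (y' - y0) \<le> _\<close> \<open>\<beta> > 0\<close> by (simp add: distrib_left[symmetric])
    moreover have "infdist (g y') K \<le> norm (g y' - q)" using infdist_le[OF q(1)] by (simp add: dist_norm)
    ultimately show ?thesis using q(2) by (simp add: H_def e_def dist_norm)
  qed
  have "\<bar>inner n (Dg yh h)\<bar> \<le> \<beta> * norm h" for h
    using unit_residual_stationarity[OF g_deriv _ \<open>e > 0\<close> e_def \<open>\<beta> > 0\<close>, of "r - norm (yh - y0)"]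
      yh_r lower by (simp add: n_def e_def dist_norm)
  then show ?thesis
    using that[OF yh_r n] \<open>e \<le> a\<close> by (simp add: a_def \<beta>_def e_def)
qed

lemma dir_normal_annihilator_of_approx_stationary:
  fixes g :: "'a::euclidean_space \<Rightarrow> 'b::euclidean_space" and Dg :: "'a \<Rightarrow> ('a \<Rightarrow>\<^sub>L 'b)"
  assumes g_deriv: "(g has_derivative blinfun_apply (Dg x)) (at x)" and Dg_cont: "isCont Dg x"
    and t: "t \<longlonglongrightarrow> 0" "\<And>k. t k > 0" and \<zeta>: "\<zeta> \<longlonglongrightarrow> d"
    and n: "\<And>k. n k \<in> frechet_normal_cone K (q k)" "\<And>k. norm (n k) = 1"
    and res: "(\<lambda>k. inverse (t k) *\<^sub>R (g (x + t k *\<^sub>R \<zeta> k) - q k)) \<longlonglongrightarrow> 0"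
    and b: "b \<longlonglongrightarrow> 0" and stat: "\<And>k h. \<bar>inner (n k) (Dg (x + t k *\<^sub>R \<zeta> k) h)\<bar> \<le> b k * norm h"
  obtains l where "l \<in> dir_normal_cone K (g x) (Dg x d)" "norm l = 1" "\<And>h. inner (Dg x h) l = 0"
proof -
  define y where "y k = x + t k *\<^sub>R \<zeta> k" for k
  have "(\<lambda>k. inverse (t k) *\<^sub>R (g (y k) - g x) - inverse (t k) *\<^sub>R (g (y k) - q k)) \<longlonglongrightarrow> Dg x d - 0"
    unfolding y_def by (intro tendsto_diff derivative_quotient_tendsto[OF g_deriv t \<zeta>] res)
  then have q: "(\<lambda>k. inverse (t k) *\<^sub>R (q k - g x)) \<longlonglongrightarrow> Dg x d"
    by (simp add: scaleR_diff_right)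
  have "y \<longlonglongrightarrow> x + 0 *\<^sub>R d" unfolding y_def by (intro tendsto_intros t \<zeta>)
  then have Dg_lim: "(\<lambda>k. norm (Dg (y k) - Dg x)) \<longlonglongrightarrow> 0"
    using tendsto_norm_zero[OF LIM_zero[OF isCont_tendsto_compose[OF Dg_cont]]] by simp
  have kernel: "(\<lambda>k. inner (n k) (Dg x h)) \<longlonglongrightarrow> 0" for h
  proof (rule Lim_null_comparison[OF always_eventually[OF allI]])
    fix k
    have "\<bar>inner (n k) ((Dg (y k) - Dg x) h)\<bar> \<le> norm (Dg (y k) - Dg x) * norm h"
      using Cauchy_Schwarz_ineq2[of "n k"] norm_blinfun[of "Dg (y k) - Dg x" h] n(2)[of k]
      by (metis mult_1 order_trans)
    then show "norm (inner (n k) (Dg x h)) \<le> b k * norm h + norm (Dg (y k) - Dg x) * norm h"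
      using stat[of k h] by (simp add: y_def blinfun.diff_left inner_diff_right)
    show "(\<lambda>k. b k * norm h + norm (Dg (y k) - Dg x) * norm h) \<longlonglongrightarrow> 0"
      using tendsto_add[OF tendsto_mult[OF b tendsto_const] tendsto_mult[OF Dg_lim tendsto_const],
          of "norm h" "norm h"] by simp
  qed
  obtain l r where r: "strict_mono r" "(n \<circ> r) \<longlonglongrightarrow> l" "norm l = 1"
    using unit_sequence_convergent_subseq[of n] n(2) by blast
  have "l \<in> dir_normal_cone K (g x) (Dg x d)"
  proof (rule dir_normal_coneI[where t="t \<circ> r" and p="q \<circ> r" and n="n \<circ> r"])
    show "(t \<circ> r) \<longlonglongrightarrow> 0" by (rule LIMSEQ_subseq_LIMSEQ[OF t(1) r(1)])
    show "(\<lambda>k. inverse ((t \<circ> r) k) *\<^sub>R ((q \<circ> r) k - g x)) \<longlonglongrightarrow> Dg x d"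
      using LIMSEQ_subseq_LIMSEQ[OF q r(1)] by (simp add: o_def)
  qed (use t(2) n(1) r(2) in auto)
  moreover have "inner (Dg x h) l = 0" for h
  proof -
    have "(\<lambda>k. inner ((n \<circ> r) k) (Dg x h)) \<longlonglongrightarrow> inner l (Dg x h)" by (intro tendsto_intros r(2))
    moreover have "(\<lambda>k. inner ((n \<circ> r) k) (Dg x h)) \<longlonglongrightarrow> 0"
      using LIMSEQ_subseq_LIMSEQ[OF kernel r(1)] by (simp add: o_def)
    ultimately show ?thesis using LIMSEQ_unique by (metis inner_commute)
  qed
  ultimately show ?thesis using that r(3) by blast
qed

lemma violation_scale_bounds:
  fixes a D \<tau> N m :: real
  assumes m: "m \<ge> 1" and a: "a \<ge> 0" and aD: "m\<^sup>2 * a < D" and D: "D \<le> \<tau> * N"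
    and \<tau>: "\<tau> > 0" and N: "N \<ge> 1"
  shows "a / \<tau> \<le> N / m" and "2 * a / min D (\<tau> / m) \<le> 2 * N / m"
proof -
  have mm: "m \<le> m\<^sup>2" using m by (simp add: power2_eq_square)
  have "m * a \<le> \<tau> * N"
    using aD D mult_right_mono[OF mm a] by linarith
  then show "a / \<tau> \<le> N / m" using m \<tau> by (simp add: field_simps)
  show "2 * a / min D (\<tau> / m) \<le> 2 * N / m"
  proof (cases "D \<le> \<tau> / m")
    case True
    have "D > 0" using aD a m by (smt (verit) mult_nonneg_nonneg zero_le_power2)
    have "m * (2 * a) \<le> 2 * N * D"
      using aD mult_right_mono[OF mm a] mult_right_mono[OF N, of D] \<open>D > 0\<close> by linarith
    then show ?thesis using True m \<open>D > 0\<close> by (simp add: field_simps)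
  next
    case False
    have "m\<^sup>2 * (2 * a) \<le> 2 * N * \<tau>" using aD D by (simp add: algebra_simps)
    then show ?thesis using False m \<tau> by (simp add: field_simps power2_eq_square)
  qed
qed

lemma approximately_stationary_normal_of_violation:
  fixes g :: "'a::euclidean_space \<Rightarrow> 'b::euclidean_space" and Dg :: "'a \<Rightarrow> ('a \<Rightarrow>\<^sub>L 'b)"
  assumes g_deriv: "\<And>y. (g has_derivative blinfun_apply (Dg y)) (at y)"
    and K: "closed K" and xK: "g x \<in> K"
    and \<tau>: "\<tau> > 0" and m: "m \<ge> 1" and N: "norm d' \<le> N" "N \<ge> 1"
    and viol: "m\<^sup>2 * infdist (g (x + \<tau> *\<^sub>R d')) K < infdist (x + \<tau> *\<^sub>R d') (feasible_set g K)"
  shows "\<exists>\<zeta> q n. norm (\<zeta> - d') \<le> inverse m \<and> n \<in> frechet_normal_cone K q \<and> norm n = 1 \<and>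
    norm (g (x + \<tau> *\<^sub>R \<zeta>) - q) \<le> \<tau> * (N / m) \<and>
    (\<forall>h. \<bar>inner n (Dg (x + \<tau> *\<^sub>R \<zeta>) h)\<bar> \<le> (2 * N / m) * norm h)"
proof -
  define y where "y = x + \<tau> *\<^sub>R d'"
  define D where "D = infdist y (feasible_set g K)"
  define a where "a = infdist (g y) K"
  define r where "r = min D (\<tau> / m)"
  have a0: "a \<ge> 0" by (simp add: a_def infdist_nonneg)
  have aD: "m\<^sup>2 * a < D" using viol by (simp add: a_def D_def y_def)
  have DN: "D \<le> \<tau> * N"
  proof -
    have "D \<le> dist y x" unfolding D_def using xK by (intro infdist_le) (simp add: feasible_set_def)
    also have "\<dots> \<le> \<tau> * N" using \<tau> N by (simp add: y_def dist_norm mult_left_mono)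
    finally show ?thesis .
  qed
  have "a > 0"
  proof (rule ccontr)
    assume "\<not> a > 0"
    then have "g y \<in> K" using a0 in_closed_iff_infdist_zero[OF K] xK by (force simp: a_def)
    then have "D = 0" by (simp add: D_def feasible_set_def)
    then show False using aD a0 by (metis mult_nonneg_nonneg not_less zero_le_power2)
  qed
  have "r > 0" using aD \<tau> m \<open>a > 0\<close>
    by (simp add: r_def) (smt (verit) mult_pos_pos zero_less_power)
  have "K \<noteq> {}" "r \<le> infdist y (feasible_set g K)" "infdist (g y) K > 0"
    using xK \<open>a > 0\<close> by (auto simp: r_def D_def a_def)
  then obtain yh n q where yh: "norm (yh - y) < r" and n: "n \<in> frechet_normal_cone K q" "norm n = 1"
    and gq: "norm (g yh - q) \<le> a" and stat: "\<And>h. \<bar>inner n (Dg yh h)\<bar> \<le> (2 * a / r) * norm h"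
    unfolding a_def by (rule approximately_stationary_normal[OF g_deriv K(1) _ \<open>r > 0\<close>]) blast
  define \<zeta> where "\<zeta> = inverse \<tau> *\<^sub>R (yh - x)"
  have yh_eq: "yh = x + \<tau> *\<^sub>R \<zeta>" using \<tau> by (simp add: \<zeta>_def)
  have "\<zeta> - d' = inverse \<tau> *\<^sub>R (yh - y)"
    using \<tau> by (simp add: \<zeta>_def y_def scaleR_diff_right scaleR_add_right)
  then have "norm (\<zeta> - d') = norm (yh - y) / \<tau>" using \<tau> by (simp add: divide_inverse_commute)
  also have "\<dots> \<le> (\<tau> / m) / \<tau>" using yh \<tau> by (intro divide_right_mono) (simp_all add: r_def)
  also have "\<dots> = inverse m" using \<tau> by (simp add: inverse_eq_divide)
  finally have "norm (\<zeta> - d') \<le> inverse m" .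
  moreover have "norm (g (x + \<tau> *\<^sub>R \<zeta>) - q) \<le> \<tau> * (N / m)"
    using gq violation_scale_bounds(1)[OF m a0 aD DN \<tau> N(2)] \<tau>
    by (simp add: yh_eq pos_divide_le_eq mult.commute)
  moreover have "\<bar>inner n (Dg (x + \<tau> *\<^sub>R \<zeta>) h)\<bar> \<le> (2 * N / m) * norm h" for h
  proof -
    have "\<bar>inner n (Dg yh h)\<bar> \<le> (2 * a / r) * norm h" by (rule stat)
    also have "\<dots> \<le> (2 * N / m) * norm h"
      using violation_scale_bounds(2)[OF m a0 aD DN \<tau> N(2)] by (intro mult_right_mono) (simp_all add: r_def)
    finally show ?thesis by (simp add: yh_eq)
  qed
  ultimately show ?thesis using n by blast
qed

text \<open>If the estimate failed, there would be points \<open>x + t d'\<close> with \<open>t \<rightarrow> 0\<close>, \<open>d' \<rightarrow> d\<close> whose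
  distance to the feasible set exceeds \<open>m\<^sup>2\<close> times their constraint violation; the Ekeland-type
  step turns them into approximately stationary unit normals, whose limit violates DirRCQ.\<close>

lemma metric_subregularity_of_DirRCQ:
  fixes g :: "'a::euclidean_space \<Rightarrow> 'b::euclidean_space" and Dg :: "'a \<Rightarrow> ('a \<Rightarrow>\<^sub>L 'b)"
  assumes g_deriv: "\<And>y. (g has_derivative blinfun_apply (Dg y)) (at y)"
    and Dg_cont: "isCont Dg x" and K: "closed K" and xK: "g x \<in> K"
    and rcq: "DirRCQ Dg g K x d"
  obtains \<rho> L where "\<rho> > 0" "\<And>t d'. 0 < t \<Longrightarrow> t < \<rho> \<Longrightarrow> norm (d' - d) < \<rho> \<Longrightarrow>
      infdist (x + t *\<^sub>R d') (feasible_set g K) \<le> L * infdist (g (x + t *\<^sub>R d')) K"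
proof -
  define m where "m k = real (Suc k)" for k
  have m: "m k \<ge> 1" "inverse (m k) > 0" for k by (simp_all add: m_def)
  define N where "N = norm d + 1"
  have "\<exists>\<rho>>0. \<exists>L. \<forall>t d'. 0 < t \<and> t < \<rho> \<and> norm (d' - d) < \<rho> \<longrightarrow>
      infdist (x + t *\<^sub>R d') (feasible_set g K) \<le> L * infdist (g (x + t *\<^sub>R d')) K"
  proof (rule ccontr)
    assume "\<not> ?thesis"
    then have "\<forall>k. \<exists>t d'. 0 < t \<and> t < inverse (m k) \<and> norm (d' - d) < inverse (m k) \<and>
        (m k)\<^sup>2 * infdist (g (x + t *\<^sub>R d')) K < infdist (x + t *\<^sub>R d') (feasible_set g K)"
      using m(2) by (meson not_le)
    then obtain tt dd where tt: "\<And>k. 0 < tt k" "\<And>k. tt k < inverse (m k)"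
      and dd: "\<And>k. norm (dd k - d) < inverse (m k)"
      and viol: "\<And>k. (m k)\<^sup>2 * infdist (g (x + tt k *\<^sub>R dd k)) K
                  < infdist (x + tt k *\<^sub>R dd k) (feasible_set g K)"
      by metis
    have dd_N: "norm (dd k) \<le> N" for k
      using dd[of k] norm_triangle_sub[of "dd k" d] inverse_le_1_iff[of "m k"] m(1)[of k]
      by (simp add: N_def norm_minus_commute)
    have "N \<ge> 1" by (simp add: N_def)
    define good where "good k \<zeta> q n \<longleftrightarrow> norm (\<zeta> - dd k) \<le> inverse (m k) \<and>
        n \<in> frechet_normal_cone K q \<and> norm n = 1 \<and> norm (g (x + tt k *\<^sub>R \<zeta>) - q) \<le> tt k * (N / m k) \<and>
        (\<forall>h. \<bar>inner n (Dg (x + tt k *\<^sub>R \<zeta>) h)\<bar> \<le> (2 * N / m k) * norm h)" for k \<zeta> q n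
    have "\<exists>\<zeta> q n. good k \<zeta> q n" for k
      unfolding good_def
      by (rule approximately_stationary_normal_of_violation[OF g_deriv K xK tt(1) m(1) dd_N \<open>N \<ge> 1\<close> viol])
    then obtain \<zeta> q n where "\<And>k. good k (\<zeta> k) (q k) (n k)" by metis
    then have \<zeta>: "\<And>k. norm (\<zeta> k - dd k) \<le> inverse (m k)"
      and n: "\<And>k. n k \<in> frechet_normal_cone K (q k)" "\<And>k. norm (n k) = 1"
      and res: "\<And>k. norm (g (x + tt k *\<^sub>R \<zeta> k) - q k) \<le> tt k * (N / m k)"
      and stat: "\<And>k h. \<bar>inner (n k) (Dg (x + tt k *\<^sub>R \<zeta> k) h)\<bar> \<le> (2 * N / m k) * norm h"
      by (simp_all add: good_def)
    have rate: "(\<lambda>k. c / m k) \<longlonglongrightarrow> 0" for c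
      unfolding m_def using LIMSEQ_Suc[OF lim_const_over_n] by simp
    have tt_lim: "tt \<longlonglongrightarrow> 0"
      by (rule Lim_null_comparison[OF always_eventually[OF allI] rate[of 1]])
        (use tt in \<open>simp add: less_imp_le divide_inverse\<close>)
    have "(\<lambda>k. \<zeta> k - d) \<longlonglongrightarrow> 0"
      by (rule Lim_null_comparison[OF always_eventually[OF allI] rate[of 2]])
        (use norm_diff_triangle_le[OF \<zeta> less_imp_le[OF dd]] in \<open>simp add: divide_inverse\<close>)
    then have \<zeta>_lim: "\<zeta> \<longlonglongrightarrow> d" by (rule LIM_zero_cancel)
    have "norm (inverse (tt k) *\<^sub>R (g (x + tt k *\<^sub>R \<zeta> k) - q k)) \<le> N / m k" for k
    proof -
      have "norm (inverse (tt k) *\<^sub>R (g (x + tt k *\<^sub>R \<zeta> k) - q k)) = norm (g (x + tt k *\<^sub>R \<zeta> k) - q k) / tt k"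
        using tt(1)[of k] by (simp add: divide_inverse_commute)
      also have "\<dots> \<le> N / m k" using res[of k] tt(1)[of k] by (simp add: pos_divide_le_eq mult.commute)
      finally show ?thesis .
    qed
    then have "(\<lambda>k. inverse (tt k) *\<^sub>R (g (x + tt k *\<^sub>R \<zeta> k) - q k)) \<longlonglongrightarrow> 0"
      by (intro Lim_null_comparison[OF always_eventually[OF allI] rate[of N]])
    from dir_normal_annihilator_of_approx_stationary[OF g_deriv Dg_cont tt_lim tt(1) \<zeta>_lim n this
        rate[of "2 * N"] stat]
    obtain l where "l \<in> dir_normal_cone K (g x) (Dg x d)" "norm l = 1" "\<And>h. inner (Dg x h) l = 0"
      by blast
    then show False using rcq dir_normal_cone_subset_conv unfolding DirRCQ_def by force
  qed
  then show ?thesis using that by blast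
qed

section \<open>Second-order feasible arcs\<close>

lemma closed_feasible_set:
  assumes "\<And>y. (g has_derivative blinfun_apply (Dg y)) (at y)" and "closed K"
  shows "closed (feasible_set g K)"
proof -
  have "feasible_set g K = g -` K" by (auto simp: feasible_set_def)
  moreover have "isCont g y" for y using assms(1) has_derivative_continuous by blast
  ultimately show ?thesis using continuous_closed_vimage[OF assms(2)] by metis
qed

text \<open>Since \<open>v\<close> is polar to the directional normals, \<open>p + s v\<close> stays within \<open>o(s)\<close> of \<open>K\<close>;
  metric subregularity turns the resulting \<open>o(s)\<close> constraint violation at \<open>x + t d + s z\<close> into an
  \<open>o(s)\<close> distance to the feasible set.\<close>

lemma feasible_second_order_correction:
  fixes g :: "'a::euclidean_space \<Rightarrow> 'b::euclidean_space" and Dg :: "'a \<Rightarrow> ('a \<Rightarrow>\<^sub>L 'b)"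
  assumes g_deriv: "\<And>y. (g has_derivative blinfun_apply (Dg y)) (at y)"
    and Dg_cont: "isCont Dg x" and K: "closed K" and xK: "g x \<in> K"
    and rcq: "DirRCQ Dg g K x d"
    and polar: "\<And>n. n \<in> dir_normal_cone K (g x) (Dg x d) \<Longrightarrow> inner n v \<le> 0"
    and t: "t \<longlonglongrightarrow> 0" "\<And>k. t k > 0" and s: "\<And>k. s k > 0" and st: "(\<lambda>k. s k / t k) \<longlonglongrightarrow> 0"
    and pK: "\<And>k. p k \<in> K" and pu: "(\<lambda>k. inverse (t k) *\<^sub>R (p k - g x)) \<longlonglongrightarrow> Dg x d"
    and gz: "(\<lambda>k. inverse (s k) *\<^sub>R (g (x + t k *\<^sub>R d + s k *\<^sub>R z) - (p k + s k *\<^sub>R v))) \<longlonglongrightarrow> 0"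
  obtains yh where "\<And>k. yh k \<in> feasible_set g K"
    "(\<lambda>k. inverse (s k) *\<^sub>R (yh k - (x + t k *\<^sub>R d + s k *\<^sub>R z))) \<longlonglongrightarrow> 0"
proof -
  define \<Phi> where "\<Phi> = feasible_set g K"
  define y where "y k = x + t k *\<^sub>R d + s k *\<^sub>R z" for k
  have Kviol: "(\<lambda>k. infdist (g (y k)) K / s k) \<longlonglongrightarrow> 0"
  proof (rule Lim_null_comparison[OF always_eventually[OF allI]])
    fix k
    have "infdist (g (y k)) K \<le> infdist (p k + s k *\<^sub>R v) K + dist (g (y k)) (p k + s k *\<^sub>R v)"
      by (rule infdist_triangle)
    then have "infdist (g (y k)) K / s k
        \<le> (infdist (p k + s k *\<^sub>R v) K + dist (g (y k)) (p k + s k *\<^sub>R v)) / s k"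
      using s[of k] by (simp add: divide_right_mono)
    also have "\<dots> = infdist (p k + s k *\<^sub>R v) K / s k
        + norm (inverse (s k) *\<^sub>R (g (y k) - (p k + s k *\<^sub>R v)))"
      using s[of k] by (simp add: add_divide_distrib dist_norm divide_inverse_commute distrib_left)
    finally show "norm (infdist (g (y k)) K / s k)
        \<le> infdist (p k + s k *\<^sub>R v) K / s k + norm (inverse (s k) *\<^sub>R (g (y k) - (p k + s k *\<^sub>R v)))"
      using s[of k] by (simp add: infdist_nonneg)
    show "(\<lambda>k. infdist (p k + s k *\<^sub>R v) K / s k
        + norm (inverse (s k) *\<^sub>R (g (y k) - (p k + s k *\<^sub>R v)))) \<longlonglongrightarrow> 0"
      using tendsto_add[OF infdist_polar_shift_tendsto_zero[OF K polar pK t pu s st]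
          tendsto_norm_zero[OF gz]] by (simp add: y_def)
  qed
  obtain \<rho> L where \<rho>: "\<rho> > 0" and subreg: "\<And>t d'. 0 < t \<Longrightarrow> t < \<rho> \<Longrightarrow> norm (d' - d) < \<rho> \<Longrightarrow>
      infdist (x + t *\<^sub>R d') \<Phi> \<le> L * infdist (g (x + t *\<^sub>R d')) K"
    using metric_subregularity_of_DirRCQ[OF g_deriv Dg_cont K xK rcq] unfolding \<Phi>_def by blast
  have y_eq: "y k = x + t k *\<^sub>R (d + (s k / t k) *\<^sub>R z)" for k
    using t(2)[of k] by (simp add: y_def scaleR_add_right)
  have "(\<lambda>k. (s k / t k) *\<^sub>R z) \<longlonglongrightarrow> 0"
    using tendsto_scaleR[OF st tendsto_const, of z] by simp
  from tendsto_norm_zero[OF this]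
  have "(\<lambda>k. norm (d + (s k / t k) *\<^sub>R z - d)) \<longlonglongrightarrow> 0" by simp
  then have "eventually (\<lambda>k. t k < \<rho> \<and> norm (d + (s k / t k) *\<^sub>R z - d) < \<rho>) sequentially"
    using order_tendstoD(2)[OF t(1) \<rho>] order_tendstoD(2)[OF _ \<rho>] eventually_conj by blast
  then have "eventually (\<lambda>k. norm (infdist (y k) \<Phi> / s k) \<le> L * (infdist (g (y k)) K / s k))
      sequentially"
  proof eventually_elim
    case (elim k)
    then have "infdist (y k) \<Phi> \<le> L * infdist (g (y k)) K" using subreg t(2) by (simp add: y_eq)
    then show ?case using s[of k] by (simp add: infdist_nonneg divide_right_mono)
  qed
  then have dist_lim: "(\<lambda>k. infdist (y k) \<Phi> / s k) \<longlonglongrightarrow> 0"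
    using tendsto_mult[OF tendsto_const Kviol, of L] by (auto intro: Lim_null_comparison)
  have "\<exists>w. w \<in> \<Phi> \<and> infdist (y k) \<Phi> = dist (y k) w" for k
    using infdist_attains_inf[OF closed_feasible_set[OF g_deriv K]] xK
    unfolding \<Phi>_def feasible_set_def by blast
  then obtain yh where yh: "\<And>k. yh k \<in> \<Phi>" "\<And>k. infdist (y k) \<Phi> = dist (y k) (yh k)"
    by metis
  have "(\<lambda>k. inverse (s k) *\<^sub>R (yh k - y k)) \<longlonglongrightarrow> 0"
  proof (rule Lim_null_comparison[OF always_eventually[OF allI] dist_lim])
    fix k show "norm (inverse (s k) *\<^sub>R (yh k - y k)) \<le> infdist (y k) \<Phi> / s k"
      using s[of k] yh(2)[of k] by (simp add: dist_norm norm_minus_commute divide_inverse_commute)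
  qed
  then show ?thesis using that yh(1) unfolding \<Phi>_def y_def by blast
qed

text \<open>Second-order tangent vectors are the case
  \<open>c = 1\<close>, asymptotic second-order tangent vectors the case \<open>c = 0\<close>.\<close>

definition second_order_approach :: "'b::real_normed_vector set \<Rightarrow> 'b \<Rightarrow> 'b \<Rightarrow> real \<Rightarrow> 'b \<Rightarrow> bool"
  where "second_order_approach K y u c w \<longleftrightarrow> (\<exists>t s wk. t \<longlonglongrightarrow> 0 \<and> (\<forall>k. t k > 0 \<and> s k > 0) \<and>
      (\<lambda>k. s k / t k) \<longlonglongrightarrow> 0 \<and> (\<lambda>k. (t k)\<^sup>2 / (2 * s k)) \<longlonglongrightarrow> c \<and> wk \<longlonglongrightarrow> w \<and>
      (\<forall>k. y + t k *\<^sub>R u + s k *\<^sub>R wk k \<in> K))"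

lemma second_order_approach_if_second_tangent:
  assumes "w \<in> second_tangent_set K y u"
  shows "second_order_approach K y u 1 w"
proof -
  obtain t wk where t: "\<forall>k. t k > 0" "t \<longlonglongrightarrow> 0" and "wk \<longlonglongrightarrow> w"
    and "\<forall>k. y + t k *\<^sub>R u + ((1/2) * (t k)\<^sup>2) *\<^sub>R wk k \<in> K"
    using assms unfolding second_tangent_set_def by blast
  moreover have "(\<lambda>k. ((1/2) * (t k)\<^sup>2) / t k) = (\<lambda>k. (1/2) * t k)"
  proof
    fix k show "((1/2) * (t k)\<^sup>2) / t k = (1/2) * t k" using t(1) by (simp add: power2_eq_square)
  qed
  then have "(\<lambda>k. ((1/2) * (t k)\<^sup>2) / t k) \<longlonglongrightarrow> 0"
    using tendsto_mult[OF tendsto_const t(2), of "1/2"] by simp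
  moreover have "(\<lambda>k. (t k)\<^sup>2 / (2 * ((1/2) * (t k)\<^sup>2))) = (\<lambda>k. 1)"
  proof
    fix k show "(t k)\<^sup>2 / (2 * ((1/2) * (t k)\<^sup>2)) = 1" using t(1) by (simp add: less_imp_neq[symmetric])
  qed
  then have "(\<lambda>k. (t k)\<^sup>2 / (2 * ((1/2) * (t k)\<^sup>2))) \<longlonglongrightarrow> 1" by simp
  moreover have "\<forall>k. t k > 0 \<and> (1/2) * (t k)\<^sup>2 > 0" using t(1) by (simp add: less_imp_neq[symmetric])
  ultimately show ?thesis unfolding second_order_approach_def
    by (intro exI[of _ t] exI[of _ "\<lambda>k. (1/2) * (t k)\<^sup>2"] exI[of _ wk]) blast
qed

lemma second_order_approach_if_asymptotic_second_tangent:
  assumes "w \<in> asymptotic_second_tangent_cone K y u"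
  shows "second_order_approach K y u 0 w"
proof -
  obtain t r wk where tr: "\<forall>k. t k > 0 \<and> r k > 0" "t \<longlonglongrightarrow> 0" "r \<longlonglongrightarrow> 0"
    "(\<lambda>k. t k / r k) \<longlonglongrightarrow> 0" "wk \<longlonglongrightarrow> w" "\<forall>k. y + t k *\<^sub>R u + ((1/2) * t k * r k) *\<^sub>R wk k \<in> K"
    using assms unfolding asymptotic_second_tangent_cone_def by blast
  moreover have "(\<lambda>k. ((1/2) * t k * r k) / t k) = (\<lambda>k. (1/2) * r k)"
  proof
    fix k show "((1/2) * t k * r k) / t k = (1/2) * r k" using tr(1) by (simp add: less_imp_neq[symmetric])
  qed
  then have "(\<lambda>k. ((1/2) * t k * r k) / t k) \<longlonglongrightarrow> 0"
    using tendsto_mult[OF tendsto_const tr(3), of "1/2"] by simp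
  moreover have "(\<lambda>k. (t k)\<^sup>2 / (2 * ((1/2) * t k * r k))) = (\<lambda>k. t k / r k)"
  proof
    fix k show "(t k)\<^sup>2 / (2 * ((1/2) * t k * r k)) = t k / r k"
      using tr(1) by (simp add: less_imp_neq[symmetric] power2_eq_square)
  qed
  moreover have "\<forall>k. t k > 0 \<and> (1/2) * t k * r k > 0" using tr(1) by simp
  ultimately show ?thesis unfolding second_order_approach_def
    by (intro exI[of _ t] exI[of _ "\<lambda>k. (1/2) * t k * r k"] exI[of _ wk]) simp
qed

lemma sq_max_zero_diff_ge:
  fixes \<theta> \<eta> :: real
  assumes "\<theta> \<ge> 0" "\<eta> > 0"
  shows "\<theta>\<^sup>2 - 2 * \<theta> * \<eta> \<le> (max 0 (\<theta> - \<eta>))\<^sup>2"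
proof (cases "\<theta> \<ge> \<eta>")
  case True
  then show ?thesis by (simp add: power2_diff)
next
  case False
  then have "\<theta> * (\<theta> - 2 * \<eta>) \<le> 0" using assms by (intro mult_nonneg_nonpos) auto
  with False show ?thesis by (simp add: power2_eq_square algebra_simps)
qed

lemma sq_le_of_truncated_sq_le:
  fixes \<kappa> c \<theta> L :: real
  assumes bound: "\<And>\<eta>. \<eta> > 0 \<Longrightarrow> 2 * \<kappa> * c * (max 0 (\<theta> - \<eta>))\<^sup>2 \<le> L"
    and \<kappa>: "\<kappa> \<ge> 0" and c: "c \<ge> 0" and \<theta>: "\<theta> \<ge> 0"
  shows "2 * \<kappa> * c * \<theta>\<^sup>2 \<le> L"
proof (rule field_le_epsilon)
  fix e :: real assume "e > 0"
  define \<eta> where "\<eta> = e / (4 * (\<kappa> * c * \<theta>) + 1)"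
  have "\<kappa> * c * \<theta> \<ge> 0" using \<kappa> c \<theta> by simp
  then have \<eta>: "\<eta> > 0" "4 * (\<kappa> * c * \<theta>) * \<eta> \<le> e"
    using \<open>e > 0\<close> by (simp_all add: \<eta>_def field_simps)
  have "2 * \<kappa> * c * (\<theta>\<^sup>2 - 2 * \<theta> * \<eta>) \<le> 2 * \<kappa> * c * (max 0 (\<theta> - \<eta>))\<^sup>2"
    using sq_max_zero_diff_ge[OF \<theta> \<eta>(1)] \<kappa> c by (simp add: mult_left_mono)
  then show "2 * \<kappa> * c * \<theta>\<^sup>2 \<le> L + e"
    using bound[OF \<eta>(1)] \<eta>(2) by (simp add: algebra_simps)
qed

lemma second_order_feasible_arc:
  fixes g :: "'a::euclidean_space \<Rightarrow> 'b::euclidean_space"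
    and Dg :: "'a \<Rightarrow> ('a \<Rightarrow>\<^sub>L 'b)" and D2g :: "'a \<Rightarrow> ('a \<Rightarrow>\<^sub>L ('a \<Rightarrow>\<^sub>L 'b))"
  assumes g_deriv: "\<And>y. (g has_derivative blinfun_apply (Dg y)) (at y)"
    and g_deriv2: "\<And>y. (Dg has_derivative blinfun_apply (D2g y)) (at y)"
    and K: "closed K" and xK: "g x \<in> K" and rcq: "DirRCQ Dg g K x d"
    and t: "t \<longlonglongrightarrow> 0" "\<And>k. t k > 0" and s: "\<And>k. s k > 0"
    and st: "(\<lambda>k. s k / t k) \<longlonglongrightarrow> 0" and c: "(\<lambda>k. (t k)\<^sup>2 / (2 * s k)) \<longlonglongrightarrow> c"
    and wk: "wk \<longlonglongrightarrow> w" and inK: "\<And>k. g x + t k *\<^sub>R Dg x d + s k *\<^sub>R wk k \<in> K"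
    and polar: "\<And>n. n \<in> dir_normal_cone K (g x) (Dg x d) \<Longrightarrow> inner n (Dg x z + c *\<^sub>R D2g x d d - w) \<le> 0"
  obtains z' where "z' \<longlonglongrightarrow> z" "\<And>k. x + t k *\<^sub>R d + s k *\<^sub>R z' k \<in> feasible_set g K"
proof -
  define p where "p k = g x + t k *\<^sub>R Dg x d + s k *\<^sub>R wk k" for k
  have "(\<lambda>k. Dg x d + (s k / t k) *\<^sub>R wk k) \<longlonglongrightarrow> Dg x d + 0 *\<^sub>R w"
    by (intro tendsto_intros st wk)
  moreover have "inverse (t k) *\<^sub>R (p k - g x) = Dg x d + (s k / t k) *\<^sub>R wk k" for k
    using t(2)[of k] by (simp add: p_def scaleR_add_right divide_inverse_commute)
  ultimately have pu: "(\<lambda>k. inverse (t k) *\<^sub>R (p k - g x)) \<longlonglongrightarrow> Dg x d" by simp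
  define v where "v = Dg x z + c *\<^sub>R D2g x d d - w"
  have "(\<lambda>k. inverse (s k) *\<^sub>R (g (x + t k *\<^sub>R d + s k *\<^sub>R z) - g x - t k *\<^sub>R Dg x d) - wk k - v)
      \<longlonglongrightarrow> (Dg x z + c *\<^sub>R D2g x d d) - w - v"
    by (intro tendsto_diff second_order_quotient_tendsto[OF g_deriv g_deriv2[of x] t s st c] wk
        tendsto_const)
  moreover have "inverse (s k) *\<^sub>R (g (x + t k *\<^sub>R d + s k *\<^sub>R z) - (p k + s k *\<^sub>R v))
      = inverse (s k) *\<^sub>R (g (x + t k *\<^sub>R d + s k *\<^sub>R z) - g x - t k *\<^sub>R Dg x d) - wk k - v" for k
    using s[of k] by (simp add: p_def scaleR_diff_right scaleR_add_right algebra_simps)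
  ultimately have gz: "(\<lambda>k. inverse (s k) *\<^sub>R (g (x + t k *\<^sub>R d + s k *\<^sub>R z) - (p k + s k *\<^sub>R v)))
      \<longlonglongrightarrow> 0"
    by (simp add: v_def)
  have Dg_cont: "isCont Dg x" using has_derivative_continuous[OF g_deriv2] .
  obtain yh where feasible: "\<And>k. yh k \<in> feasible_set g K"
    and yh: "(\<lambda>k. inverse (s k) *\<^sub>R (yh k - (x + t k *\<^sub>R d + s k *\<^sub>R z))) \<longlonglongrightarrow> 0"
    using feasible_second_order_correction[OF g_deriv Dg_cont K xK rcq _ t s st _ pu gz]
      polar inK by (auto simp: v_def p_def)
  define z' where "z' k = z + inverse (s k) *\<^sub>R (yh k - (x + t k *\<^sub>R d + s k *\<^sub>R z))" for k
  have "z' \<longlonglongrightarrow> z" unfolding z'_def using tendsto_add[OF tendsto_const yh, of z] by simp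
  moreover have "yh k = x + t k *\<^sub>R d + s k *\<^sub>R z' k" for k
    using s[of k] by (simp add: z'_def scaleR_add_right)
  ultimately show ?thesis using that feasible by metis
qed

text \<open>The feasible arc \<open>y\<^sub>k = x + t d + s z'\<^sub>k\<close> keeps distance about \<open>t \<theta>\<close> from \<open>S\<close>, so the quadratic
  growth of \<open>f\<close> bounds the second-order difference quotient of \<open>f\<close> along it from below.\<close>

lemma second_order_primal_inequality:
  fixes f :: "'a::euclidean_space \<Rightarrow> real" and g :: "'a \<Rightarrow> 'b::euclidean_space"
    and Df :: "'a \<Rightarrow> ('a \<Rightarrow>\<^sub>L real)" and D2f :: "'a \<Rightarrow> ('a \<Rightarrow>\<^sub>L ('a \<Rightarrow>\<^sub>L real))"
    and Dg :: "'a \<Rightarrow> ('a \<Rightarrow>\<^sub>L 'b)" and D2g :: "'a \<Rightarrow> ('a \<Rightarrow>\<^sub>L ('a \<Rightarrow>\<^sub>L 'b))"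
  assumes f_deriv: "\<And>y. (f has_derivative blinfun_apply (Df y)) (at y)"
    and f_deriv2: "\<And>y. (Df has_derivative blinfun_apply (D2f y)) (at y)"
    and g_deriv: "\<And>y. (g has_derivative blinfun_apply (Dg y)) (at y)"
    and g_deriv2: "\<And>y. (Dg has_derivative blinfun_apply (D2g y)) (at y)"
    and K: "closed K" and xK: "g x \<in> K"
    and \<rho>: "\<rho> > 0" and \<kappa>: "\<kappa> \<ge> 0"
    and growth: "\<forall>y \<in> feasible_set g K. norm (y - x) < \<rho> \<longrightarrow> f x + \<kappa> * (infdist y S)\<^sup>2 \<le> f y"
    and rcq: "DirRCQ Dg g K x d" and dC: "d \<in> critical_cone Df Dg g K x"
    and \<theta>: "\<theta> \<ge> 0"
    and dist_S: "\<forall>\<eta>>0. \<exists>\<tau>>0. \<forall>t. 0 < t \<and> t < \<tau> \<longrightarrow> t * (\<theta> - \<eta>) \<le> infdist (x + t *\<^sub>R d) S"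
    and w: "second_order_approach K (g x) (Dg x d) c w"
    and polar: "\<And>n. n \<in> dir_normal_cone K (g x) (Dg x d) \<Longrightarrow> inner n (Dg x z + c *\<^sub>R D2g x d d - w) \<le> 0"
  shows "2 * \<kappa> * c * \<theta>\<^sup>2 \<le> Df x z + c * D2f x d d"
proof -
  obtain t s wk where t: "t \<longlonglongrightarrow> 0" "\<And>k. t k > 0" and s: "\<And>k. s k > 0"
    and st: "(\<lambda>k. s k / t k) \<longlonglongrightarrow> 0" and c: "(\<lambda>k. (t k)\<^sup>2 / (2 * s k)) \<longlonglongrightarrow> c"
    and wk: "wk \<longlonglongrightarrow> w" and inK: "\<And>k. g x + t k *\<^sub>R Dg x d + s k *\<^sub>R wk k \<in> K"
    using w unfolding second_order_approach_def by blast
  obtain z' where z': "z' \<longlonglongrightarrow> z" and feasible: "\<And>k. x + t k *\<^sub>R d + s k *\<^sub>R z' k \<in> feasible_set g K"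
    using second_order_feasible_arc[OF g_deriv g_deriv2 K xK rcq t s st c wk inK polar] by blast
  define yh where "yh k = x + t k *\<^sub>R d + s k *\<^sub>R z' k" for k
  define Q where "Q k = inverse (s k) * (f (yh k) - f x - t k * Df x d)" for k
  have Q: "Q \<longlonglongrightarrow> Df x z + c * D2f x d d"
    using second_order_quotient_tendsto[OF f_deriv f_deriv2[of x] t s st c z', of d]
    unfolding Q_def[abs_def] yh_def by simp
  have s0: "s \<longlonglongrightarrow> 0"
    using tendsto_mult[OF st t(1)] t(2) by (simp add: less_imp_neq[symmetric])
  have "yh \<longlonglongrightarrow> x + 0 *\<^sub>R d + 0 *\<^sub>R z"
    unfolding yh_def[abs_def] by (intro tendsto_intros t(1) s0 z')
  then have near: "eventually (\<lambda>k. norm (yh k - x) < \<rho>) sequentially"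
    using order_tendstoD(2)[OF tendsto_norm_zero[OF LIM_zero] \<rho>] by simp
  have truncated: "2 * \<kappa> * c * (max 0 (\<theta> - \<eta>))\<^sup>2 \<le> Df x z + c * D2f x d d"
    if \<eta>: "\<eta> > 0" for \<eta>
  proof -
    obtain \<tau> where \<tau>: "\<tau> > 0" "\<And>t. 0 < t \<Longrightarrow> t < \<tau> \<Longrightarrow> t * (\<theta> - \<eta>) \<le> infdist (x + t *\<^sub>R d) S"
      using dist_S \<eta> by blast
    define m where "m k = max 0 (\<theta> - \<eta> - (s k / t k) * norm (z' k))" for k
    have "(\<lambda>k. 2 * \<kappa> * ((t k)\<^sup>2 / (2 * s k)) * (m k)\<^sup>2)
        \<longlonglongrightarrow> 2 * \<kappa> * c * (max 0 (\<theta> - \<eta> - 0 * norm z))\<^sup>2"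
      unfolding m_def by (intro tendsto_intros c st z')
    then have "(\<lambda>k. 2 * \<kappa> * ((t k)\<^sup>2 / (2 * s k)) * (m k)\<^sup>2) \<longlonglongrightarrow> 2 * \<kappa> * c * (max 0 (\<theta> - \<eta>))\<^sup>2"
      by simp
    moreover have "eventually (\<lambda>k. 2 * \<kappa> * ((t k)\<^sup>2 / (2 * s k)) * (m k)\<^sup>2 \<le> Q k) sequentially"
      using near order_tendstoD(2)[OF t(1) \<tau>(1)]
    proof eventually_elim
      case (elim k)
      have "t k * (\<theta> - \<eta>) - s k * norm (z' k) \<le> infdist (yh k) S"
        using \<tau>(2)[OF t(2) elim(2)] infdist_triangle[of "x + t k *\<^sub>R d" S "yh k"] s[of k]
        by (simp add: yh_def dist_norm)
      moreover have "t k * (\<theta> - \<eta>) - s k * norm (z' k) = t k * (\<theta> - \<eta> - (s k / t k) * norm (z' k))"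
        using t(2)[of k] by (simp add: algebra_simps)
      ultimately have "t k * m k \<le> infdist (yh k) S"
        using t(2)[of k] infdist_nonneg[of "yh k" S] by (auto simp: m_def)
      then have "\<kappa> * (t k * m k)\<^sup>2 \<le> \<kappa> * (infdist (yh k) S)\<^sup>2"
        using t(2)[of k] \<kappa> by (intro mult_left_mono power_mono) (simp_all add: m_def)
      also have "\<dots> \<le> f (yh k) - f x"
        using growth feasible[of k, folded yh_def] elim(1) by fastforce
      finally have "\<kappa> * (t k * m k)\<^sup>2 \<le> f (yh k) - f x" .
      moreover have "t k * Df x d \<le> 0"
        using dC t(2)[of k] by (simp add: critical_cone_def mult_nonneg_nonpos)
      ultimately have "\<kappa> * (t k * m k)\<^sup>2 \<le> f (yh k) - f x - t k * Df x d" by linarith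
      then have "inverse (s k) * (\<kappa> * (t k * m k)\<^sup>2) \<le> Q k"
        using s[of k] by (simp add: Q_def mult_left_mono)
      moreover have "inverse (s k) * (\<kappa> * (t k * m k)\<^sup>2) = 2 * \<kappa> * ((t k)\<^sup>2 / (2 * s k)) * (m k)\<^sup>2"
        using s[of k] by (simp add: power_mult_distrib field_simps)
      ultimately show ?case by simp
    qed
    ultimately show ?thesis by (rule tendsto_le[OF sequentially_bot Q])
  qed
  have "\<forall>k. 0 \<le> (t k)\<^sup>2 / (2 * s k)" using s by (simp add: less_imp_le)
  then have "c \<ge> 0" by (rule tendsto_lowerbound[OF c always_eventually sequentially_bot])
  with truncated show ?thesis by (rule sq_le_of_truncated_sq_le[OF _ \<kappa> _ \<theta>])
qed

section \<open>Multipliers\<close>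

lemma second_order_multiplier:
  fixes f :: "'a::euclidean_space \<Rightarrow> real" and g :: "'a \<Rightarrow> 'b::euclidean_space"
    and Df :: "'a \<Rightarrow> ('a \<Rightarrow>\<^sub>L real)" and D2f :: "'a \<Rightarrow> ('a \<Rightarrow>\<^sub>L ('a \<Rightarrow>\<^sub>L real))"
    and Dg :: "'a \<Rightarrow> ('a \<Rightarrow>\<^sub>L 'b)" and D2g :: "'a \<Rightarrow> ('a \<Rightarrow>\<^sub>L ('a \<Rightarrow>\<^sub>L 'b))"
  assumes f_deriv: "\<And>y. (f has_derivative blinfun_apply (Df y)) (at y)"
    and f_deriv2: "\<And>y. (Df has_derivative blinfun_apply (D2f y)) (at y)"
    and g_deriv: "\<And>y. (g has_derivative blinfun_apply (Dg y)) (at y)"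
    and g_deriv2: "\<And>y. (Dg has_derivative blinfun_apply (D2g y)) (at y)"
    and K: "closed K" and xK: "g x \<in> K"
    and \<rho>: "\<rho> > 0" and \<kappa>: "\<kappa> \<ge> 0"
    and growth: "\<forall>y \<in> feasible_set g K. norm (y - x) < \<rho> \<longrightarrow> f x + \<kappa> * (infdist y S)\<^sup>2 \<le> f y"
    and rcq: "DirRCQ Dg g K x d" and dC: "d \<in> critical_cone Df Dg g K x"
    and \<theta>: "\<theta> \<ge> 0"
    and dist_S: "\<forall>\<eta>>0. \<exists>\<tau>>0. \<forall>t. 0 < t \<and> t < \<tau> \<longrightarrow> t * (\<theta> - \<eta>) \<le> infdist (x + t *\<^sub>R d) S"
    and W: "W \<noteq> {}" "convex W" and approach: "\<And>w. w \<in> W \<Longrightarrow> second_order_approach K (g x) (Dg x d) c w"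
  shows "\<exists>l \<in> multipliers_c Df Dg g K x d.
           \<forall>w\<in>W. inner l w \<le> c * hessL D2f D2g x l d - 2 * \<kappa> * c * \<theta>\<^sup>2"
proof -
  define C where "C = conv_dir_normal_cone K (g x) (Dg x d)"
  have "Dg x d \<in> tangent_cone K (g x)" using dC by (simp add: critical_cone_def)
  then have C: "closed C" "convex_cone C"
    unfolding C_def by (simp_all add: closed_conv_dir_normal_cone convex_cone_conv_dir_normal_cone)
  have "\<exists>l\<in>C. (\<forall>v. Df x v + inner (Dg x v) l = 0) \<and>
      (\<forall>w\<in>W. (c * D2f x d d - 2 * \<kappa> * c * \<theta>\<^sup>2) + inner l (c *\<^sub>R D2g x d d - w) \<ge> 0)"
  proof (rule multiplier_by_separation[OF C _ W(2,1)])
    show "l = 0" if "l \<in> C" "\<forall>v. inner (Dg x v) l = 0" for l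
      using rcq that unfolding DirRCQ_def C_def by blast
    fix z w assume "w \<in> W" "\<forall>n\<in>C. inner n (Dg x z + c *\<^sub>R D2g x d d - w) \<le> 0"
    then show "0 \<le> Df x z + (c * D2f x d d - 2 * \<kappa> * c * \<theta>\<^sup>2)"
      using second_order_primal_inequality[OF f_deriv f_deriv2 g_deriv g_deriv2 K xK \<rho> \<kappa> growth rcq
          dC \<theta> dist_S approach[OF \<open>w \<in> W\<close>], of z] dir_normal_cone_subset_conv
      unfolding C_def by fastforce
  qed
  then obtain l where "l \<in> C" "\<forall>v. Df x v + inner (Dg x v) l = 0"
    and ineq: "\<forall>w\<in>W. (c * D2f x d d - 2 * \<kappa> * c * \<theta>\<^sup>2) + inner l (c *\<^sub>R D2g x d d - w) \<ge> 0"
    by blast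
  then have "l \<in> multipliers_c Df Dg g K x d" by (simp add: multipliers_c_def C_def)
  moreover have "inner l w \<le> c * hessL D2f D2g x l d - 2 * \<kappa> * c * \<theta>\<^sup>2" if "w \<in> W" for w
    using ineq that by (simp add: hessL_def inner_diff_right inner_commute[of _ l] algebra_simps)
  ultimately show ?thesis by blast
qed

lemma support_fun_le_ereal:
  assumes "\<And>w. w \<in> W \<Longrightarrow> inner l w \<le> r"
  shows "support_fun W l \<le> ereal r"
  unfolding support_fun_def using assms by (simp add: SUP_least)

section \<open>Growth away from the solution set\<close>

lemma infdist_lessE:
  assumes "infdist y A < r" "A \<noteq> {}"
  obtains a where "a \<in> A" "dist y a < r"
  using assms cInf_lessD[of "dist y ` A" r] by (auto simp: infdist_notempty)

lemma infdist_geI: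
  assumes "A \<noteq> {}" "\<And>a. a \<in> A \<Longrightarrow> r \<le> dist y a"
  shows "r \<le> infdist y A"
  using assms by (simp add: infdist_notempty cINF_greatest)

lemma weak_sharp_min2_at_solution:
  assumes sharp: "weak_sharp_min2 f g K xbar \<kappa> \<delta>"
    and x: "x \<in> optimal_set f g K" "x \<in> ball xbar \<delta>"
  obtains \<rho> where "\<rho> > 0" "\<forall>y \<in> feasible_set g K. norm (y - x) < \<rho> \<longrightarrow>
      f x + \<kappa> * (infdist y (optimal_set f g K))\<^sup>2 \<le> f y"
proof
  have xbar: "xbar \<in> feasible_set g K" and ws: "\<And>y. y \<in> feasible_set g K \<inter> ball xbar \<delta> \<Longrightarrow>
      f xbar + \<kappa> * (infdist y (optimal_set f g K))\<^sup>2 \<le> f y"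
    using sharp unfolding weak_sharp_min2_def by auto
  have "f x \<le> f xbar" using x(1) xbar unfolding optimal_set_def by blast
  show "\<delta> - dist xbar x > 0" using x(2) by simp
  show "\<forall>y \<in> feasible_set g K. norm (y - x) < \<delta> - dist xbar x \<longrightarrow>
      f x + \<kappa> * (infdist y (optimal_set f g K))\<^sup>2 \<le> f y"
  proof (intro ballI impI)
    fix y assume "y \<in> feasible_set g K" "norm (y - x) < \<delta> - dist xbar x"
    moreover have "dist xbar y \<le> dist xbar x + dist x y" by (rule dist_triangle)
    ultimately show "f x + \<kappa> * (infdist y (optimal_set f g K))\<^sup>2 \<le> f y"
      using ws[of y] \<open>f x \<le> f xbar\<close> by (simp add: dist_norm norm_minus_commute)
  qed
qed

lemma infdist_ray_ge_of_eps_prox_normal: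
  fixes S :: "'a::euclidean_space set"
  assumes xS: "x \<in> S" and dN: "d \<in> eps_prox_normal_cone S x \<epsilon>" and \<eta>: "\<eta> > 0"
  shows "\<exists>\<tau>>0. \<forall>t. 0 < t \<and> t < \<tau> \<longrightarrow> t * ((1 - 2 * \<epsilon>) * norm d - \<eta>) \<le> infdist (x + t *\<^sub>R d) S"
proof -
  define N where "N = prox_normal_cone S x"
  have "0 \<in> N" using xS unfolding N_def prox_normal_cone_def by (auto intro: exI[of _ 1])
  moreover have "infdist d N < \<epsilon> * norm d + \<eta> / 2"
    using dN \<eta> unfolding eps_prox_normal_cone_def N_def by simp
  ultimately obtain v where "v \<in> N" and dv: "dist d v < \<epsilon> * norm d + \<eta> / 2"
    using infdist_lessE by blast
  then obtain \<tau> where \<tau>: "\<tau> > 0" and nearest: "\<forall>y\<in>S. dist (x + \<tau> *\<^sub>R v) x \<le> dist (x + \<tau> *\<^sub>R v) y"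
    unfolding N_def prox_normal_cone_def by blast
  have "t * ((1 - 2 * \<epsilon>) * norm d - \<eta>) \<le> infdist (x + t *\<^sub>R d) S" if t: "0 < t" "t < \<tau>" for t
  proof -
    have "t * norm v \<le> infdist (x + t *\<^sub>R v) S"
    proof (rule infdist_geI)
      fix y assume "y \<in> S"
      then have "\<tau> * norm v \<le> dist (x + \<tau> *\<^sub>R v) y" using nearest \<tau> by (simp add: dist_norm)
      moreover have "dist (x + \<tau> *\<^sub>R v) y \<le> (\<tau> - t) * norm v + dist (x + t *\<^sub>R v) y"
        using dist_triangle[of "x + \<tau> *\<^sub>R v" y "x + t *\<^sub>R v"] t
        by (simp add: dist_norm flip: scaleR_diff_left)
      ultimately show "t * norm v \<le> dist (x + t *\<^sub>R v) y" by (simp add: algebra_simps)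
    qed (use xS in auto)
    moreover have "infdist (x + t *\<^sub>R v) S \<le> infdist (x + t *\<^sub>R d) S + t * dist d v"
      using infdist_triangle[of "x + t *\<^sub>R v" S "x + t *\<^sub>R d"] t
      by (simp add: dist_norm norm_minus_commute flip: scaleR_diff_right)
    moreover have "t * (norm d - dist d v) \<le> t * norm v"
      using norm_triangle_sub[of d v] t by (intro mult_left_mono) (auto simp: dist_norm)
    moreover have "t * ((1 - 2 * \<epsilon>) * norm d - \<eta>) \<le> t * (norm d - 2 * dist d v)"
      using dv t by (intro mult_left_mono) (auto simp: algebra_simps)
    ultimately show ?thesis by (simp add: algebra_simps)
  qed
  then show ?thesis using \<tau> by blast
qed

lemma infdist_ray_ge_of_tangent_distance:
  fixes S :: "'a::euclidean_space set"
  assumes xS: "x \<in> S" and \<eta>: "\<eta> > 0"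
  shows "\<exists>\<tau>>0. \<forall>t. 0 < t \<and> t < \<tau> \<longrightarrow> t * (infdist d (tangent_cone S x) - \<eta>) \<le> infdist (x + t *\<^sub>R d) S"
proof (rule ccontr)
  assume neg: "\<not> ?thesis"
  define \<theta> where "\<theta> = infdist d (tangent_cone S x)"
  have "\<exists>t y. 0 < t \<and> t < inverse (real (Suc k)) \<and> y \<in> S \<and> dist (x + t *\<^sub>R d) y < t * (\<theta> - \<eta>)" for k
  proof -
    obtain t where t: "0 < t" "t < inverse (real (Suc k))" "infdist (x + t *\<^sub>R d) S < t * (\<theta> - \<eta>)"
      using neg positive_imp_inverse_positive[of "real (Suc k)"] unfolding \<theta>_def
      by (meson not_le of_nat_0_less_iff zero_less_Suc)
    then show ?thesis using infdist_lessE[of "x + t *\<^sub>R d" S] xS by blast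
  qed
  then obtain t y where t: "\<And>k. 0 < t k" "\<And>k. t k < inverse (real (Suc k))"
    and yS: "\<And>k. y k \<in> S" and close: "\<And>k. dist (x + t k *\<^sub>R d) (y k) < t k * (\<theta> - \<eta>)"
    by metis
  define e where "e k = inverse (t k) *\<^sub>R (y k - x)" for k
  have de: "norm (d - e k) < \<theta> - \<eta>" for k
  proof -
    have "d - e k = inverse (t k) *\<^sub>R ((x + t k *\<^sub>R d) - y k)"
      using t(1)[of k] by (simp add: e_def scaleR_diff_right algebra_simps)
    then have "norm (d - e k) = dist (x + t k *\<^sub>R d) (y k) / t k"
      using t(1)[of k] by (simp add: dist_norm divide_inverse_commute)
    then show ?thesis using close[of k] t(1)[of k] by (simp add: pos_divide_less_eq mult.commute)
  qed
  then have "bounded (range e)"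
    using norm_triangle_sub[of "e _" d] by (auto simp: bounded_iff norm_minus_commute intro!: exI[of _ "norm d + \<theta>"])
      (smt (verit) \<eta>)
  then obtain l r where r: "strict_mono r" "(e \<circ> r) \<longlonglongrightarrow> l"
    using bounded_imp_convergent_subsequence by blast
  have "eventually (\<lambda>k. norm (t k) \<le> inverse (real (Suc k))) sequentially"
    using t by (intro always_eventually allI) (simp add: less_imp_le)
  then have "t \<longlonglongrightarrow> 0" using LIMSEQ_inverse_real_of_nat by (rule Lim_null_comparison)
  moreover have "x + t k *\<^sub>R e k = y k" for k using t(1)[of k] by (simp add: e_def)
  ultimately have "l \<in> tangent_cone S x"
    unfolding tangent_cone_def using t(1) yS r
    by (intro CollectI exI[of _ "t \<circ> r"] exI[of _ "e \<circ> r"]) (auto intro: LIMSEQ_subseq_LIMSEQ)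
  then have "\<theta> \<le> norm (d - l)" unfolding \<theta>_def using infdist_le by (metis dist_norm)
  moreover have "norm (d - l) \<le> \<theta> - \<eta>"
    using de by (intro tendsto_upperbound[OF tendsto_norm[OF tendsto_diff[OF tendsto_const r(2)]]])
      (auto intro: always_eventually less_imp_le)
  ultimately show False using \<eta> by simp
qed

lemma ereal_diff_ge_of_support_le:
  assumes "support_fun W l \<le> ereal (h - r)"
  shows "ereal r \<le> ereal h - support_fun W l"
proof -
  have "ereal h - ereal (h - r) \<le> ereal h - support_fun W l"
    by (rule ereal_minus_mono[OF order_refl assms])
  then show ?thesis by simp
qed

lemma second_order_conditions_at_solution:
  fixes f :: "'a::euclidean_space \<Rightarrow> real" and g :: "'a \<Rightarrow> 'b::euclidean_space"
    and Df :: "'a \<Rightarrow> ('a \<Rightarrow>\<^sub>L real)" and D2f :: "'a \<Rightarrow> ('a \<Rightarrow>\<^sub>L ('a \<Rightarrow>\<^sub>L real))"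
    and Dg :: "'a \<Rightarrow> ('a \<Rightarrow>\<^sub>L 'b)" and D2g :: "'a \<Rightarrow> ('a \<Rightarrow>\<^sub>L ('a \<Rightarrow>\<^sub>L 'b))"
  assumes f_deriv: "\<And>y. (f has_derivative blinfun_apply (Df y)) (at y)"
    and f_deriv2: "\<And>y. (Df has_derivative blinfun_apply (D2f y)) (at y)"
    and g_deriv: "\<And>y. (g has_derivative blinfun_apply (Dg y)) (at y)"
    and g_deriv2: "\<And>y. (Dg has_derivative blinfun_apply (D2g y)) (at y)"
    and K: "closed K" and sharp: "weak_sharp_min2 f g K xbar \<kappa> \<delta>"
    and rcq: "\<forall>x \<in> feasible_set g K \<inter> ball xbar \<delta>. \<forall>d \<in> critical_cone Df Dg g K x. DirRCQ Dg g K x d"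
    and x: "x \<in> optimal_set f g K \<inter> ball xbar \<delta>" and dC: "d \<in> critical_cone Df Dg g K x"
    and \<theta>: "\<theta> \<ge> 0"
    and dist_S: "\<forall>\<eta>>0. \<exists>\<tau>>0. \<forall>t. 0 < t \<and> t < \<tau> \<longrightarrow>
                   t * (\<theta> - \<eta>) \<le> infdist (x + t *\<^sub>R d) (optimal_set f g K)"
    and r: "r \<le> 2 * \<kappa> * \<theta>\<^sup>2"
  shows "(\<forall>Kd. Kd \<noteq> {} \<and> convex Kd \<and>
              Kd \<subseteq> asymptotic_second_tangent_cone K (g x) (blinfun_apply (Dg x) d) \<longrightarrow>
           (\<exists>lam \<in> multipliers_c Df Dg g K x d. support_fun Kd lam \<le> 0)) \<and>
        (second_tangent_set K (g x) (blinfun_apply (Dg x) d) \<noteq> {} \<longrightarrow>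
          (\<forall>Kd. Kd \<noteq> {} \<and> convex Kd \<and>
                Kd \<subseteq> second_tangent_set K (g x) (blinfun_apply (Dg x) d) \<longrightarrow>
             (\<exists>lam \<in> multipliers_c Df Dg g K x d.
                ereal (hessL D2f D2g x lam d) - support_fun Kd lam \<ge> ereal r)))"
proof -
  have \<kappa>: "\<kappa> \<ge> 0" using sharp by (simp add: weak_sharp_min2_def)
  have feasible: "x \<in> feasible_set g K" using x by (simp add: optimal_set_def)
  then have xK: "g x \<in> K" by (simp add: feasible_set_def)
  have rc: "DirRCQ Dg g K x d" using rcq feasible x dC by blast
  obtain \<rho> where \<rho>: "\<rho> > 0" and growth: "\<forall>y \<in> feasible_set g K. norm (y - x) < \<rho> \<longrightarrow>
      f x + \<kappa> * (infdist y (optimal_set f g K))\<^sup>2 \<le> f y"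
    using weak_sharp_min2_at_solution[OF sharp] x by blast
  note multiplier = second_order_multiplier[OF f_deriv f_deriv2 g_deriv g_deriv2 K xK \<rho> \<kappa> growth rc dC]
  (* For asymptotic second-order tangent vectors c = 0, so the growth rate is irrelevant and
     the trivial rate 0 suffices. *)
  have trivial_dist: "\<forall>\<eta>>0. \<exists>\<tau>>0. \<forall>t. 0 < t \<and> t < \<tau> \<longrightarrow>
      t * (0 - \<eta>) \<le> infdist (x + t *\<^sub>R d) (optimal_set f g K)"
    by (auto intro!: exI[of _ 1] order_trans[OF _ infdist_nonneg] mult_nonneg_nonpos)
  show ?thesis
  proof (intro conjI allI impI)
    fix Kd assume "Kd \<noteq> {} \<and> convex Kd \<and> Kd \<subseteq> asymptotic_second_tangent_cone K (g x) (Dg x d)"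
    then obtain l where "l \<in> multipliers_c Df Dg g K x d" "\<forall>w\<in>Kd. inner l w \<le> 0"
      using multiplier[OF order_refl trivial_dist, of Kd 0]
        second_order_approach_if_asymptotic_second_tangent by force
    then show "\<exists>l \<in> multipliers_c Df Dg g K x d. support_fun Kd l \<le> 0"
      using support_fun_le_ereal[of Kd l 0] zero_ereal_def by (metis (no_types))
  next
    fix Kd assume "Kd \<noteq> {} \<and> convex Kd \<and> Kd \<subseteq> second_tangent_set K (g x) (Dg x d)"
    then obtain l where "l \<in> multipliers_c Df Dg g K x d"
      "\<forall>w\<in>Kd. inner l w \<le> hessL D2f D2g x l d - 2 * \<kappa> * \<theta>\<^sup>2"
      using multiplier[OF \<theta> dist_S, of Kd 1] second_order_approach_if_second_tangent by force
    then show "\<exists>l \<in> multipliers_c Df Dg g K x d. ereal r \<le> ereal (hessL D2f D2g x l d) - support_fun Kd l"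
      using ereal_diff_ge_of_support_le support_fun_le_ereal r by (meson ereal_less_eq(3) order_trans)
  qed
qed

theorem corollary3p10:
  fixes f :: "'a::euclidean_space \<Rightarrow> real" and g :: "'a \<Rightarrow> 'b::euclidean_space"
    and K :: "'b set"
    and Df :: "'a \<Rightarrow> ('a \<Rightarrow>\<^sub>L real)" and D2f :: "'a \<Rightarrow> ('a \<Rightarrow>\<^sub>L ('a \<Rightarrow>\<^sub>L real))"
    and Dg :: "'a \<Rightarrow> ('a \<Rightarrow>\<^sub>L 'b)" and D2g :: "'a \<Rightarrow> ('a \<Rightarrow>\<^sub>L ('a \<Rightarrow>\<^sub>L 'b))"
    and xbar :: 'a and \<kappa> \<delta> :: real
  assumes f_deriv: "\<And>x. (f has_derivative blinfun_apply (Df x)) (at x)"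
    and f_deriv2: "\<And>x. (Df has_derivative blinfun_apply (D2f x)) (at x)"
    and f_cont2: "continuous_on UNIV D2f"
    and g_deriv: "\<And>x. (g has_derivative blinfun_apply (Dg x)) (at x)"
    and g_deriv2: "\<And>x. (Dg has_derivative blinfun_apply (D2g x)) (at x)"
    and g_cont2: "continuous_on UNIV D2g"
    and K_closed: "closed K"
    and S_nonempty: "optimal_set f g K \<noteq> {}"
    and sharp: "weak_sharp_min2 f g K xbar \<kappa> \<delta>"
    and rcq: "\<forall>x \<in> feasible_set g K \<inter> ball xbar \<delta>. \<forall>d \<in> critical_cone Df Dg g K x.
                DirRCQ Dg g K x d"
  shows
   "(\<forall>\<epsilon> \<in> {0..<1/2}. \<forall>x \<in> optimal_set f g K \<inter> ball xbar \<delta>.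
      \<forall>d \<in> critical_cone Df Dg g K x \<inter> eps_prox_normal_cone (optimal_set f g K) x \<epsilon>.
        (\<forall>Kd. Kd \<noteq> {} \<and> convex Kd \<and>
              Kd \<subseteq> asymptotic_second_tangent_cone K (g x) (blinfun_apply (Dg x) d) \<longrightarrow>
           (\<exists>lam \<in> multipliers_c Df Dg g K x d. support_fun Kd lam \<le> 0)) \<and>
        (second_tangent_set K (g x) (blinfun_apply (Dg x) d) \<noteq> {} \<longrightarrow>
          (\<forall>Kd. Kd \<noteq> {} \<and> convex Kd \<and>
                Kd \<subseteq> second_tangent_set K (g x) (blinfun_apply (Dg x) d) \<longrightarrow>
             (\<exists>lam \<in> multipliers_c Df Dg g K x d.
                ereal (hessL D2f D2g x lam d) - support_fun Kd lam
                  \<ge> ereal (2 * \<kappa> * (1 - 2 * \<epsilon>)\<^sup>2 * (norm d)\<^sup>2))))) \<and>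
    (\<forall>x \<in> optimal_set f g K \<inter> ball xbar \<delta>. \<forall>d \<in> critical_cone Df Dg g K x.
        (\<forall>Kd. Kd \<noteq> {} \<and> convex Kd \<and>
              Kd \<subseteq> asymptotic_second_tangent_cone K (g x) (blinfun_apply (Dg x) d) \<longrightarrow>
           (\<exists>lam \<in> multipliers_c Df Dg g K x d. support_fun Kd lam \<le> 0)) \<and>
        (second_tangent_set K (g x) (blinfun_apply (Dg x) d) \<noteq> {} \<longrightarrow>
          (\<forall>Kd. Kd \<noteq> {} \<and> convex Kd \<and>
                Kd \<subseteq> second_tangent_set K (g x) (blinfun_apply (Dg x) d) \<longrightarrow>
             (\<exists>lam \<in> multipliers_c Df Dg g K x d.
                ereal (hessL D2f D2g x lam d) - support_fun Kd lam
                  \<ge> ereal (2 * \<kappa> * (infdist d (tangent_cone (optimal_set f g K) x))\<^sup>2)))))"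
proof -
  note conditions = second_order_conditions_at_solution[OF f_deriv f_deriv2 g_deriv g_deriv2 K_closed
      sharp rcq]
  show ?thesis
    apply (rule conjI)
    subgoal
      apply (intro ballI)
      subgoal for \<epsilon> x d
        using infdist_ray_ge_of_eps_prox_normal[of x "optimal_set f g K" d \<epsilon>]
        by (intro conditions[where \<theta> = "(1 - 2 * \<epsilon>) * norm d"]) (auto simp: power_mult_distrib)
      done
    subgoal
      apply (intro ballI)
      subgoal for x d
        using infdist_ray_ge_of_tangent_distance[of x "optimal_set f g K" _ d]
        by (intro conditions[where \<theta> = "infdist d (tangent_cone (optimal_set f g K) x)"])
          (auto simp: infdist_nonneg)
      done
    done
qed

end
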